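(* Let $\beta\in\Phi_+$ and write $\beta=r_{i_L}\cdots r_{i_2}(\alpha_{i_1})$ with $i_1,\dots,i_L\in I$ and $L$ minimal among all such expressions (so $r_{i_L}\cdots r_{i_2}$ is a reduced word). For $t\in\{1,\dots,L-1\}$ set $\beta_t=r_{i_L}\cdots r_{i_{t+2}}(\alpha_{i_{t+1}})$ (so $\beta_{L-1}=\alpha_{i_L}$), and for $t\in\{1,\dots,L\}$ set $\gamma_t^\vee=r_{i_t}\cdots r_{i_2}(\alpha_{i_1}^\vee)$ (so $\gamma_1^\vee=\alpha_{i_1}^\vee$, $\gamma_L^\vee=\beta^\vee$). The following are equivalent: (1) $\beta$ is quantum; (2) $\langle\beta^\vee,\beta_t\rangle=1$ for every $t\in\{1,\dots,L-1\}$; (3) for every $t\in\{1,\dots,L\}$, $\gamma_t^\vee=\sum_{k=1}^t\alpha_{i_k}^\vee$, and $\langle\gamma_{t-1}^\vee,\alpha_{i_t}\rangle=-1$ whenever $t\ge2$; (4) $\ell(s_\beta)=2\,\mathrm{ht}(\beta^\vee)-1$.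
   Context: Kac–Moody root datum $(A,X,Y,(\alpha_i)_{i\in I},(\alpha_i^\vee)_{i\in I})$: $A=(a_{i,j})$ generalized Cartan matrix, $X,Y$ free $\mathbb Z$-modules of finite rank with perfect pairing $\langle\cdot,\cdot\rangle:Y\times X\to\mathbb Z$, linearly independent simple roots $(\alpha_i)\subset X$ and simple coroots $(\alpha_i^\vee)\subset Y$ with $\langle\alpha_i^\vee,\alpha_j\rangle=a_{i,j}$. $r_i(x)=x-\langle\alpha_i^\vee,x\rangle\alpha_i$, $r_i(y)=y-\langle y,\alpha_i\rangle\alpha_i^\vee$; $W^v=\langle r_i\rangle$ with length $\ell$. $\Phi=W^v\{\alpha_i\}$, $\Phi_\pm$ as usual; $\beta^\vee=w(\alpha_i^\vee)$ and $s_\beta=wr_iw^{-1}$ for $\beta=w(\alpha_i)$; $\mathrm{ht}(\sum N_i\alpha_i^\vee)=\sum N_i$. $\mathrm{Inv}(w)=\{\alpha\in\Phi_+\mid w\alpha\in\Phi_-\}$. $\beta\in\Phi_+$ is quantum if $\langle\beta^\vee,\gamma\rangle=1$ for all $\gamma\in\mathrm{Inv}(s_\beta)\setminus\{\beta\}$. *)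

theory Defs
  imports Main
begin

text \<open>Coordinates: X = Y = ('n \<Rightarrow> int) with 'n a finite type (free Z-modules of
finite rank, identified with Z^n via dual bases), perfect pairing
<y,x> = sum_j y j * x j.\<close>

type_synonym 'n lat = "'n \<Rightarrow> int"

definition pair :: "('n::finite) lat \<Rightarrow> 'n lat \<Rightarrow> int" where
  "pair y x = (\<Sum>j\<in>UNIV. y j * x j)"

definition lincomb :: "('i::finite \<Rightarrow> int) \<Rightarrow> ('i \<Rightarrow> ('n::finite) lat) \<Rightarrow> 'n lat" where
  "lincomb c v = (\<lambda>j. \<Sum>i\<in>UNIV. c i * v i j)"

definition lin_indep :: "('i::finite \<Rightarrow> ('n::finite) lat) \<Rightarrow> bool" where
  "lin_indep v \<longleftrightarrow> (\<forall>c. lincomb c v = (\<lambda>_. 0) \<longrightarrow> (\<forall>i. c i = 0))"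

definition gen_cartan :: "('i \<Rightarrow> 'i \<Rightarrow> int) \<Rightarrow> bool" where
  "gen_cartan A \<longleftrightarrow> (\<forall>i. A i i = 2) \<and> (\<forall>i j. i \<noteq> j \<longrightarrow> A i j \<le> 0)
     \<and> (\<forall>i j. A i j = 0 \<longleftrightarrow> A j i = 0)"

definition km_datum :: "('i::finite \<Rightarrow> ('n::finite) lat) \<Rightarrow> ('i \<Rightarrow> 'n lat) \<Rightarrow> bool" where
  "km_datum al alv \<longleftrightarrow> gen_cartan (\<lambda>i j. pair (alv i) (al j)) \<and> lin_indep al \<and> lin_indep alv"

definition rX :: "('i \<Rightarrow> ('n::finite) lat) \<Rightarrow> ('i \<Rightarrow> 'n lat) \<Rightarrow> 'i \<Rightarrow> 'n lat \<Rightarrow> 'n lat" where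
  "rX al alv i x = (\<lambda>j. x j - pair (alv i) x * al i j)"

definition rY :: "('i \<Rightarrow> ('n::finite) lat) \<Rightarrow> ('i \<Rightarrow> 'n lat) \<Rightarrow> 'i \<Rightarrow> 'n lat \<Rightarrow> 'n lat" where
  "rY al alv i y = (\<lambda>j. y j - pair y (al i) * alv i j)"

text \<open>Action of the word [j1,...,jm] = r_{jm} ... r_{j1} (first list element applied first).\<close>
definition actX :: "('i \<Rightarrow> ('n::finite) lat) \<Rightarrow> ('i \<Rightarrow> 'n lat) \<Rightarrow> 'i list \<Rightarrow> 'n lat \<Rightarrow> 'n lat" where
  "actX al alv ws = fold (rX al alv) ws"

definition actY :: "('i \<Rightarrow> ('n::finite) lat) \<Rightarrow> ('i \<Rightarrow> 'n lat) \<Rightarrow> 'i list \<Rightarrow> 'n lat \<Rightarrow> 'n lat" where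
  "actY al alv ws = fold (rY al alv) ws"

definition weyl :: "('i \<Rightarrow> ('n::finite) lat) \<Rightarrow> ('i \<Rightarrow> 'n lat) \<Rightarrow> ('n lat \<Rightarrow> 'n lat) set" where
  "weyl al alv = {actX al alv ws | ws. True}"

definition wlen :: "('i \<Rightarrow> ('n::finite) lat) \<Rightarrow> ('i \<Rightarrow> 'n lat) \<Rightarrow> ('n lat \<Rightarrow> 'n lat) \<Rightarrow> nat" where
  "wlen al alv w = (LEAST m. \<exists>ws. length ws = m \<and> actX al alv ws = w)"

definition roots :: "('i \<Rightarrow> ('n::finite) lat) \<Rightarrow> ('i \<Rightarrow> 'n lat) \<Rightarrow> 'n lat set" where
  "roots al alv = {actX al alv ws (al i) | ws i. True}"

definition pos_roots :: "('i::finite \<Rightarrow> ('n::finite) lat) \<Rightarrow> ('i \<Rightarrow> 'n lat) \<Rightarrow> 'n lat set" where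
  "pos_roots al alv = {b \<in> roots al alv. \<exists>c. (\<forall>i. 0 \<le> c i) \<and> b = lincomb c al}"

definition neg_roots :: "('i::finite \<Rightarrow> ('n::finite) lat) \<Rightarrow> ('i \<Rightarrow> 'n lat) \<Rightarrow> 'n lat set" where
  "neg_roots al alv = {b \<in> roots al alv. \<exists>c. (\<forall>i. c i \<le> 0) \<and> b = lincomb c al}"

definition coroot :: "('i \<Rightarrow> ('n::finite) lat) \<Rightarrow> ('i \<Rightarrow> 'n lat) \<Rightarrow> 'n lat \<Rightarrow> 'n lat" where
  "coroot al alv b = (SOME c. \<exists>ws i. actX al alv ws (al i) = b \<and> c = actY al alv ws (alv i))"

definition sref :: "('i \<Rightarrow> ('n::finite) lat) \<Rightarrow> ('i \<Rightarrow> 'n lat) \<Rightarrow> 'n lat \<Rightarrow> ('n lat \<Rightarrow> 'n lat)" where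
  "sref al alv b = (SOME f. \<exists>ws i. actX al alv ws (al i) = b \<and>
      f = actX al alv ws \<circ> rX al alv i \<circ> actX al alv (rev ws))"

definition Inv :: "('i::finite \<Rightarrow> ('n::finite) lat) \<Rightarrow> ('i \<Rightarrow> 'n lat) \<Rightarrow> ('n lat \<Rightarrow> 'n lat) \<Rightarrow> 'n lat set" where
  "Inv al alv w = {a \<in> pos_roots al alv. w a \<in> neg_roots al alv}"

definition quantum :: "('i::finite \<Rightarrow> ('n::finite) lat) \<Rightarrow> ('i \<Rightarrow> 'n lat) \<Rightarrow> 'n lat \<Rightarrow> bool" where
  "quantum al alv b \<longleftrightarrow> b \<in> pos_roots al alv \<and>
     (\<forall>g \<in> Inv al alv (sref al alv b) - {b}. pair (coroot al alv b) g = 1)"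

definition ht :: "('i::finite \<Rightarrow> ('n::finite) lat) \<Rightarrow> 'n lat \<Rightarrow> int" where
  "ht alv y = (\<Sum>i\<in>UNIV. (THE N. y = lincomb N alv) i)"

end

theory Submission
  imports Defs
begin

text \<open>The basic fact is positivity: if \<open>\<ell>(w) \<le> \<ell>(w r\<^sub>i)\<close> then \<open>w \<alpha>\<^sub>i\<close> is a nonnegative
  combination of simple roots. It is proved by induction on \<open>\<ell>(w)\<close>, peeling off a factor in the
  rank 2 subgroup generated by \<open>r\<^sub>i\<close> and another reflection; there no root has coordinates of
  opposite signs, because an integral quadratic form is invariant. Positivity yields that roots
  are positive or negative, that \<open>\<beta>\<^sup>\<or>\<close> is well defined, and that along a reduced word of
  \<open>w\<close> the inversion set has \<open>\<ell>(w)\<close> elements and the sum of \<open>\<langle>y, \<gamma>\<rangle>\<close> over it telescopes to a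
  difference of heights.

  For \<open>w = s\<^sub>\<beta>\<close> every inversion \<open>\<gamma>\<close> has \<open>\<langle>\<beta>\<^sup>\<or>, \<gamma>\<rangle> \<ge> 1\<close>, the inversion \<open>\<beta>\<close> has
  \<open>\<langle>\<beta>\<^sup>\<or>, \<beta>\<rangle> = 2\<close>, and the sum is \<open>2 ht(\<beta>\<^sup>\<or>)\<close>; comparing with \<open>\<ell>(s\<^sub>\<beta>)\<close> inversions
  gives (1) \<open>\<Longleftrightarrow>\<close> (4). For a minimal expression of \<open>\<beta>\<close> the palindromic word for \<open>s\<^sub>\<beta>\<close> is
  reduced, so the \<open>\<beta>\<^sub>t\<close> are inversions of \<open>s\<^sub>\<beta>\<close>, and \<open>\<langle>\<beta>\<^sup>\<or>, \<beta>\<^sub>t\<rangle> =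
  -\<langle>\<gamma>\<^sub>t\<^sup>\<or>, \<alpha>\<^bsub>i(t+1)\<^esub>\<rangle>\<close>; this gives (1) \<open>\<Longrightarrow>\<close> (2) \<open>\<Longleftrightarrow>\<close> (3). Finally (3) means
  \<open>ht(\<beta>\<^sup>\<or>) = L\<close>, while \<open>\<ell>(s\<^sub>\<beta>) = 2L - 1\<close>, which is (4).\<close>

lemma pair_commute: "pair y x = pair x y"
  unfolding pair_def by (simp add: mult.commute)

lemma pair_lin_right: "pair y (\<lambda>j. a * p j + b * q j) = a * pair y p + b * pair y q"
  unfolding pair_def by (simp add: algebra_simps sum.distrib sum_distrib_left)

lemma pair_lin_left: "pair (\<lambda>j. a * p j + b * q j) y = a * pair p y + b * pair q y"
  unfolding pair_def by (simp add: algebra_simps sum.distrib sum_distrib_left)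

lemma pair_diff_right: "pair y (\<lambda>j. p j - c * q j) = pair y p - c * pair y q"
  unfolding pair_def by (simp add: algebra_simps sum_subtractf sum_distrib_left)

lemma pair_diff_left: "pair (\<lambda>j. p j - c * q j) y = pair p y - c * pair q y"
  unfolding pair_def by (simp add: algebra_simps sum_subtractf sum_distrib_left)

lemma pair_uminus_right: "pair y (\<lambda>j. - p j) = - pair y p"
  unfolding pair_def by (simp add: sum_negf)

lemma pair_unit_right: "pair y (\<lambda>l. if l = m then 1 else 0) = y m"
  unfolding pair_def by (simp add: if_distrib cong: if_cong)

lemma lincomb_add: "lincomb (\<lambda>i. c i + d i) v = (\<lambda>j. lincomb c v j + lincomb d v j)"
  unfolding lincomb_def by (intro ext) (simp add: algebra_simps sum.distrib)

lemma lincomb_diff: "lincomb (\<lambda>i. c i - d i) v = (\<lambda>j. lincomb c v j - lincomb d v j)"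
  unfolding lincomb_def by (intro ext) (simp add: algebra_simps sum_subtractf)

lemma lincomb_smult: "lincomb (\<lambda>i. a * c i) v = (\<lambda>j. a * lincomb c v j)"
  unfolding lincomb_def by (intro ext) (simp add: algebra_simps sum_distrib_left)

lemma lincomb_uminus: "lincomb (\<lambda>i. - c i) v = (\<lambda>j. - lincomb c v j)"
  unfolding lincomb_def by (simp add: sum_negf)

lemma lincomb_single: "lincomb (\<lambda>k. if k = i then a else 0) v = (\<lambda>j. a * v i j)"
  unfolding lincomb_def by (simp add: if_distrib[of "\<lambda>c. c * _"] cong: if_cong)

lemma lincomb_unit: "lincomb (\<lambda>k. if k = i then 1 else 0) v = v i"
  using lincomb_single[of i 1 v] by simp

lemma lincomb_inj:
  assumes "lin_indep v" "lincomb c v = lincomb d v"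
  shows "c = d"
proof -
  have "lincomb (\<lambda>i. c i - d i) v = (\<lambda>_. 0)" using assms(2) by (simp add: lincomb_diff)
  then have "\<forall>i. c i - d i = 0" using assms(1) unfolding lin_indep_def by blast
  then show ?thesis by auto
qed

lemma pair_left_inj: "(\<And>z. pair y z = pair y' z) \<Longrightarrow> y = y'"
  by (metis pair_unit_right ext)

definition pos_cone :: "('i::finite \<Rightarrow> ('n::finite) lat) \<Rightarrow> 'n lat \<Rightarrow> bool" where
  "pos_cone v x \<longleftrightarrow> (\<exists>c. (\<forall>i. 0 \<le> c i) \<and> x = lincomb c v)"

lemma pos_cone_unit: "pos_cone v (v i)"
  unfolding pos_cone_def by (rule exI[of _ "\<lambda>k. if k = i then 1 else 0"]) (simp add: lincomb_unit)

lemma pos_cone_comb: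
  assumes "pos_cone v p" "pos_cone v q" "0 \<le> x" "0 \<le> y"
  shows "pos_cone v (\<lambda>j. x * p j + y * q j)"
proof -
  obtain c d where c: "\<forall>i. 0 \<le> c i" "p = lincomb c v" and d: "\<forall>i. 0 \<le> d i" "q = lincomb d v"
    using assms(1,2) unfolding pos_cone_def by auto
  have "(\<lambda>j. x * p j + y * q j) = lincomb (\<lambda>i. x * c i + y * d i) v"
    by (simp add: c(2) d(2) lincomb_add lincomb_smult)
  moreover have "\<forall>i. 0 \<le> x * c i + y * d i" using c(1) d(1) assms(3,4) by simp
  ultimately show ?thesis unfolding pos_cone_def by (intro exI[of _ "\<lambda>i. x * c i + y * d i"]) simp
qed

lemma pos_cone_antisym:
  assumes "lin_indep v" "pos_cone v x" "pos_cone v (\<lambda>j. - x j)"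
  shows "x = (\<lambda>_. 0)"
proof -
  obtain c d where c: "\<forall>i. 0 \<le> c i" "x = lincomb c v"
    and d: "\<forall>i. 0 \<le> d i" "(\<lambda>j. - x j) = lincomb d v"
    using assms(2,3) unfolding pos_cone_def by auto
  have "lincomb (\<lambda>i. c i + d i) v = (\<lambda>_. 0)"
    by (simp add: lincomb_add flip: c(2) d(2))
  then have "\<forall>i. c i + d i = 0" using assms(1) unfolding lin_indep_def by blast
  then have "c = (\<lambda>_. 0)" using c(1) d(1) by (metis add_nonneg_eq_0_iff)
  then show ?thesis using c(2) unfolding lincomb_def by auto
qed

lemma pos_cone_uminus_iff:
  "pos_cone v (\<lambda>j. - x j) \<longleftrightarrow> (\<exists>c. (\<forall>i. c i \<le> 0) \<and> x = lincomb c v)"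
proof
  assume "pos_cone v (\<lambda>j. - x j)"
  then obtain c where "\<forall>i. 0 \<le> c i" "(\<lambda>j. - x j) = lincomb c v" unfolding pos_cone_def by auto
  then have "x = lincomb (\<lambda>i. - c i) v \<and> (\<forall>i. - c i \<le> 0)"
    by (simp add: lincomb_uminus fun_eq_iff) (metis minus_equation_iff)
  then show "\<exists>c. (\<forall>i. c i \<le> 0) \<and> x = lincomb c v" by (intro exI[of _ "\<lambda>i. - c i"]) simp
next
  assume "\<exists>c. (\<forall>i. c i \<le> 0) \<and> x = lincomb c v"
  then obtain c where "\<forall>i. c i \<le> 0" "x = lincomb c v" by auto
  then show "pos_cone v (\<lambda>j. - x j)"
    unfolding pos_cone_def by (intro exI[of _ "\<lambda>i. - c i"]) (simp add: lincomb_uminus)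
qed

lemma pos_cone_lincomb_iff:
  assumes "lin_indep v"
  shows "pos_cone v (lincomb c v) \<longleftrightarrow> (\<forall>i. 0 \<le> c i)"
  using lincomb_inj[OF assms] unfolding pos_cone_def by metis

lemma pos_cone_uminus_lincomb_iff:
  assumes "lin_indep v"
  shows "pos_cone v (\<lambda>j. - lincomb c v j) \<longleftrightarrow> (\<forall>i. c i \<le> 0)"
  using pos_cone_lincomb_iff[OF assms, of "\<lambda>i. - c i"] by (simp add: lincomb_uminus)

lemma rY_eq_rX_dual: "rY al alv = rX alv al"
  by (intro ext) (simp add: rY_def rX_def pair_commute)

lemma actY_eq_actX_dual: "actY al alv = actX alv al"
  by (intro ext) (simp add: actY_def actX_def rY_eq_rX_dual)

lemma actX_Nil [simp]: "actX al alv [] x = x"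
  by (simp add: actX_def)

lemma actX_Cons: "actX al alv (i # ws) x = actX al alv ws (rX al alv i x)"
  by (simp add: actX_def)

lemma actX_append: "actX al alv (xs @ ys) x = actX al alv ys (actX al alv xs x)"
  by (simp add: actX_def)

lemma actX_snoc: "actX al alv (xs @ [i]) x = rX al alv i (actX al alv xs x)"
  by (simp add: actX_def)

lemma fold_rX_eq_actX: "fold (\<lambda>k. rX al alv (idx k)) ks = actX al alv (map idx ks)"
  by (simp add: actX_def fold_map comp_def)

lemma fold_rY_eq_actY: "fold (\<lambda>k. rY al alv (idx k)) ks = actY al alv (map idx ks)"
  by (simp add: actY_def fold_map comp_def)

lemma rX_lin:
  "rX al alv i (\<lambda>j. a * p j + b * q j) = (\<lambda>j. a * rX al alv i p j + b * rX al alv i q j)"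
  by (intro ext) (simp add: rX_def pair_lin_right algebra_simps)

lemma actX_lin:
  "actX al alv ws (\<lambda>j. a * p j + b * q j) = (\<lambda>j. a * actX al alv ws p j + b * actX al alv ws q j)"
  by (induction ws arbitrary: p q) (simp_all add: actX_Cons rX_lin)

lemma actX_uminus: "actX al alv ws (\<lambda>j. - p j) = (\<lambda>j. - actX al alv ws p j)"
  using actX_lin[of al alv ws "-1" p 0 p] by simp

lemma actX_diff:
  "actX al alv ws (\<lambda>j. p j - c * q j) = (\<lambda>j. actX al alv ws p j - c * actX al alv ws q j)"
  using actX_lin[of al alv ws 1 p "-c" q] by simp

lemma actX_zero: "actX al alv ws (\<lambda>_. 0) = (\<lambda>_. 0)"
  using actX_lin[of al alv ws 0 "\<lambda>_. 0" 0 "\<lambda>_. 0"] by simp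

lemma rX_lincomb:
  "rX al alv k (lincomb c al)
     = lincomb (\<lambda>i. c i - (if i = k then pair (alv k) (lincomb c al) else 0)) al"
  by (simp add: lincomb_diff lincomb_single rX_def mult.commute)

lemma actX_lincomb: "\<exists>d. actX al alv ws (lincomb c al) = lincomb d al"
  by (induction ws arbitrary: c) (auto simp: actX_Cons rX_lincomb)

definition reduced_word :: "('i \<Rightarrow> ('n::finite) lat) \<Rightarrow> ('i \<Rightarrow> 'n lat) \<Rightarrow> 'i list \<Rightarrow> bool" where
  "reduced_word al alv ws \<longleftrightarrow> wlen al alv (actX al alv ws) = length ws"

lemma wlen_le: "wlen al alv (actX al alv ws) \<le> length ws"
  unfolding wlen_def by (rule Least_le) blast

lemma wlen_le_if_actX_eq: "actX al alv ws = w \<Longrightarrow> wlen al alv w \<le> length ws"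
  using wlen_le by blast

lemma reduced_word_exists: "\<exists>ws'. reduced_word al alv ws' \<and> actX al alv ws' = actX al alv ws"
proof -
  have "\<exists>ws'. length ws' = wlen al alv (actX al alv ws) \<and> actX al alv ws' = actX al alv ws"
    unfolding wlen_def by (rule LeastI_ex) blast
  then show ?thesis unfolding reduced_word_def by metis
qed

lemma reduced_wordI:
  assumes "\<And>ws'. actX al alv ws' = actX al alv ws \<Longrightarrow> length ws \<le> length ws'"
  shows "reduced_word al alv ws"
proof -
  obtain ws' where "reduced_word al alv ws'" "actX al alv ws' = actX al alv ws"
    using reduced_word_exists by blast
  then show ?thesis using assms[of ws'] wlen_le[of al alv ws] unfolding reduced_word_def by simp
qed

lemma reduced_word_le:
  "reduced_word al alv ws \<Longrightarrow> actX al alv ws' = actX al alv ws \<Longrightarrow> length ws \<le> length ws'"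
  unfolding reduced_word_def by (metis wlen_le)

lemma reduced_word_infix:
  assumes "reduced_word al alv (xs @ ys @ zs)"
  shows "reduced_word al alv ys"
proof (rule reduced_wordI)
  fix ys' assume "actX al alv ys' = actX al alv ys"
  then have "actX al alv (xs @ ys' @ zs) = actX al alv (xs @ ys @ zs)"
    by (intro ext) (simp add: actX_append)
  then show "length ys \<le> length ys'" using reduced_word_le[OF assms] by fastforce
qed

lemma upt_split_at:
  assumes "a \<le> t" "t < b"
  shows "[a..<b] = [a..<t] @ t # [Suc t..<b]"
proof -
  have "[a..<b] = [a..<t] @ [t..<b]" using assms upt_add_eq_append[of a t "b - t"] by simp
  then show ?thesis using upt_conv_Cons[OF assms(2)] by simp
qed

lemma map_idx_split:
  assumes "t \<in> {1..L-1}"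
  shows "map idx [2..<L+1] = map idx [2..<t+1] @ idx (t+1) # map idx [t+2..<L+1]"
proof -
  have "[2..<L+1] = [2..<t+1] @ (t+1) # [Suc (t+1)..<L+1]"
    by (rule upt_split_at) (use assms in auto)
  then show ?thesis by (simp only: map_append list.map Suc_eq_plus1 add.assoc one_add_one)
qed

lemma actX_simple_root_as_fold:
  "\<exists>idx. actX al alv ws (al i)
     = fold (\<lambda>k. rX al alv (idx k)) [2..<(length ws + 1) + 1] (al (idx 1))"
proof -
  define idx where "idx = (\<lambda>k::nat. if k = 1 then i else ws ! (k - 2))"
  have "map idx [2..<length ws + 2] = map (\<lambda>k. idx (k + 2)) [0..<length ws]"
    by (simp only: map_add_upt[symmetric]) (simp add: map_add_upt)
  also have "\<dots> = ws" by (simp add: idx_def map_nth)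
  finally show ?thesis by (intro exI[of _ idx]) (simp add: fold_rX_eq_actX idx_def)
qed

fun alt_word :: "'a \<Rightarrow> 'a \<Rightarrow> nat \<Rightarrow> 'a list" where
  "alt_word a b 0 = []"
| "alt_word a b (Suc n) = a # alt_word b a n"

lemma alt_word_snoc: "alt_word a b (Suc n) = alt_word a b n @ [if even n then a else b]"
  by (induction n arbitrary: a b) auto

lemma length_alt_word [simp]: "length (alt_word a b n) = n"
  by (induction n arbitrary: a b) auto

lemma set_alt_word: "set (alt_word a b n) \<subseteq> {a, b}"
  by (induction n arbitrary: a b) auto

lemma alt_word_add:
  "alt_word a b (m + k)
     = alt_word a b m @ alt_word (if even m then a else b) (if even m then b else a) k"
  by (induction m arbitrary: a b) auto

lemma alt_wordI:
  assumes "set q \<subseteq> {a, b}" "a \<noteq> b" "\<forall>k. Suc k < length q \<longrightarrow> q ! k \<noteq> q ! Suc k"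
    "q \<noteq> [] \<longrightarrow> hd q = a"
  shows "q = alt_word a b (length q)"
  using assms
proof (induction q arbitrary: a b)
  case Nil
  then show ?case by simp
next
  case (Cons c q)
  have "q = alt_word b a (length q)"
  proof (rule Cons.IH)
    show "set q \<subseteq> {b, a}" and "b \<noteq> a" using Cons.prems(1,2) by auto
    show "\<forall>k. Suc k < length q \<longrightarrow> q ! k \<noteq> q ! Suc k"
    proof (intro allI impI)
      fix k assume "Suc k < length q"
      then show "q ! k \<noteq> q ! Suc k" using Cons.prems(3)
        by (metis Suc_less_eq length_Cons nth_Cons_Suc)
    qed
    show "q \<noteq> [] \<longrightarrow> hd q = b"
    proof
      assume "q \<noteq> []"
      then have "(c # q) ! 0 \<noteq> (c # q) ! 1" using Cons.prems(3) by fastforce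
      then show "hd q = b" using Cons.prems(1,4) \<open>q \<noteq> []\<close> by (cases q) auto
    qed
  qed
  then show ?case using Cons.prems(4) by simp
qed

text \<open>In a rank 2 subsystem with simple roots \<open>\<alpha>\<^sub>s, \<alpha>\<^sub>s\<^sub>'\<close> and \<open>a = -\<langle>\<alpha>\<^sub>s\<^sup>\<or>, \<alpha>\<^sub>s\<^sub>'\<rangle>\<close>,
  \<open>b = -\<langle>\<alpha>\<^sub>s\<^sub>'\<^sup>\<or>, \<alpha>\<^sub>s\<rangle>\<close>, these are the coordinates \<open>(x, y)\<close> of \<open>x \<alpha>\<^sub>s + y \<alpha>\<^sub>s\<^sub>'\<close> obtained by
  applying \<open>r\<^sub>s\<^sub>'\<close>, \<open>r\<^sub>s\<close>, \<open>r\<^sub>s\<^sub>'\<close>, \<dots> to \<open>\<alpha>\<^sub>s\<close>.\<close>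

fun rank2_coeffs :: "int \<Rightarrow> int \<Rightarrow> nat \<Rightarrow> int \<times> int" where
  "rank2_coeffs a b 0 = (1, 0)"
| "rank2_coeffs a b (Suc n) =
     (if even n
      then (fst (rank2_coeffs a b n), b * fst (rank2_coeffs a b n) - snd (rank2_coeffs a b n))
      else (a * snd (rank2_coeffs a b n) - fst (rank2_coeffs a b n), snd (rank2_coeffs a b n)))"

lemma rank2_coeffs_swap:
  "fst (rank2_coeffs a b n) = fst (rank2_coeffs b a n)
     \<and> a * snd (rank2_coeffs a b n) = b * snd (rank2_coeffs b a n)"
  by (induction n) (auto simp: algebra_simps)

lemma rank2_coeffs_zero: "snd (rank2_coeffs 0 0 n) = 0"
  by (induction n) auto

lemma rank2_coeffs_invariant:
  "b * fst (rank2_coeffs a b n) ^ 2 - a * b * fst (rank2_coeffs a b n) * snd (rank2_coeffs a b n)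
     + a * snd (rank2_coeffs a b n) ^ 2 = b"
  by (induction n) (auto simp: power2_eq_square algebra_simps)

lemma quadratic_form_mixed_signs:
  fixes a b x y :: int
  assumes "a > 0" "b > 0" "x * y < 0"
  shows "b * x ^ 2 - a * b * x * y + a * y ^ 2 > b"
proof -
  have "x \<noteq> 0" "y \<noteq> 0" using assms(3) by auto
  then have "x ^ 2 \<ge> 1" "y ^ 2 \<ge> 1"
    by (simp_all add: power2_eq_square) (smt (verit) mult_le_cancel_left1 zero_less_mult_iff)+
  then have "b * x ^ 2 \<ge> b" "a * y ^ 2 > 0" using assms(1,2)
    by (simp_all add: mult_le_cancel_left1) (smt (verit) mult_pos_pos)
  moreover have "a * b * (x * y) < 0" using assms by (simp add: mult_pos_neg)
  ultimately show ?thesis by (smt (verit) mult.assoc)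
qed

text \<open>The quadratic form \<open>b x\<^sup>2 - a b x y + a y\<^sup>2\<close> is invariant, so no root of the rank 2
  subsystem has coordinates of opposite signs.\<close>

lemma rank2_coeffs_no_mixed_signs:
  assumes "0 \<le> a" "0 \<le> b" "a = 0 \<longleftrightarrow> b = 0"
  shows "\<not> fst (rank2_coeffs a b n) * snd (rank2_coeffs a b n) < 0"
proof (cases "a = 0")
  case True
  then show ?thesis using assms(3) rank2_coeffs_zero by simp
next
  case False
  then have "a > 0" "b > 0" using assms by auto
  then show ?thesis using quadratic_form_mixed_signs rank2_coeffs_invariant
    by (metis less_irrefl)
qed

locale km_root_datum =
  fixes al :: "'i::finite \<Rightarrow> ('n::finite) lat" and alv :: "'i \<Rightarrow> 'n lat"
  assumes km: "km_datum al alv"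
begin

lemma pair_simple_coroot_root [simp]: "pair (alv i) (al i) = 2"
  using km unfolding km_datum_def gen_cartan_def by auto

lemma cartan_offdiag_nonpos: "i \<noteq> j \<Longrightarrow> pair (alv i) (al j) \<le> 0"
  using km unfolding km_datum_def gen_cartan_def by auto

lemma cartan_zero_sym: "pair (alv i) (al j) = 0 \<longleftrightarrow> pair (alv j) (al i) = 0"
  using km unfolding km_datum_def gen_cartan_def by auto

lemma simple_roots_indep: "lin_indep al"
  using km unfolding km_datum_def by auto

lemma simple_coroots_indep: "lin_indep alv"
  using km unfolding km_datum_def by auto

lemma dual_root_datum: "km_root_datum alv al"
proof -
  have "gen_cartan (\<lambda>i j. pair (al i) (alv j))"
    unfolding gen_cartan_def pair_commute[of "al _"] using cartan_zero_sym cartan_offdiag_nonpos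
      by auto
  then show ?thesis
    unfolding km_root_datum_def km_datum_def using simple_roots_indep simple_coroots_indep by auto
qed

lemma rX_rX [simp]: "rX al alv i (rX al alv i x) = x"
proof (intro ext)
  fix j
  have "pair (alv i) (rX al alv i x) = - pair (alv i) x"
    unfolding rX_def by (simp add: pair_diff_right)
  then show "rX al alv i (rX al alv i x) j = x j" by (simp add: rX_def algebra_simps)
qed

lemma rX_inj: "inj (rX al alv i)"
  by (metis injI rX_rX)

lemma rX_simple_root: "rX al alv i (al i) = (\<lambda>j. - al i j)"
  by (intro ext) (simp add: rX_def)

lemma pair_rY_rX: "pair (rY al alv i y) (rX al alv i x) = pair y x"
proof -
  have "pair (alv i) (rX al alv i x) = - pair (alv i) x"
    and "pair y (rX al alv i x) = pair y x - pair (alv i) x * pair y (al i)"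
    unfolding rX_def by (simp_all add: pair_diff_right)
  then show ?thesis unfolding rY_def by (simp add: pair_diff_left)
qed

lemma pair_rX_right: "pair y (rX al alv i x) = pair (rY al alv i y) x"
  using pair_rY_rX[of i y "rX al alv i x"] by simp

lemma pair_rY_simple_root: "pair (rY al alv i y) (al i) = - pair y (al i)"
  using pair_rX_right[of y i "al i"] by (simp add: rX_simple_root pair_uminus_right)

lemma actX_rev_actX [simp]: "actX al alv (rev ws) (actX al alv ws x) = x"
  by (induction ws arbitrary: x) (simp_all add: actX_Cons actX_snoc)

lemma actX_actX_rev [simp]: "actX al alv ws (actX al alv (rev ws) x) = x"
  by (induction ws arbitrary: x) (simp_all add: actX_Cons actX_snoc)

lemma actX_inj: "actX al alv ws x = actX al alv ws y \<Longrightarrow> x = y"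
  by (metis actX_rev_actX)

lemma pair_actY_actX: "pair (actY al alv ws y) (actX al alv ws x) = pair y x"
  by (induction ws arbitrary: x y) (simp_all add: actY_def actX_def pair_rY_rX)

lemma actX_cancel_double: "actX al alv (xs @ c # c # ys) = actX al alv (xs @ ys)"
  by (intro ext) (simp add: actX_append actX_Cons)

text \<open>The word \<open>rev ws @ [i] @ ws\<close> acts as \<open>w r\<^sub>i w\<^sup>-\<^sup>1\<close>, where \<open>w = actX ws\<close>.\<close>

lemma actX_conj_simple:
  "actX al alv (rev ws @ [i] @ ws) z
     = (\<lambda>j. z j - pair (actY al alv ws (alv i)) z * actX al alv ws (al i) j)"
proof -
  define u where "u = actX al alv (rev ws) z"
  have "actX al alv (rev ws @ [i] @ ws) z = actX al alv ws (rX al alv i u)"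
    by (simp add: actX_append actX_Cons u_def)
  also have "\<dots> = (\<lambda>j. actX al alv ws u j - pair (alv i) u * actX al alv ws (al i) j)"
    unfolding rX_def by (rule actX_diff)
  also have "pair (alv i) u = pair (actY al alv ws (alv i)) z"
    using pair_actY_actX[of ws "alv i" u] by (simp add: u_def)
  finally show ?thesis by (simp add: u_def)
qed

lemma simple_root_nonzero: "al i \<noteq> (\<lambda>_. 0)"
proof
  assume "al i = (\<lambda>_. 0)"
  then have "lincomb (\<lambda>k. if k = i then 1 else 0) al = (\<lambda>_. 0)" by (simp add: lincomb_unit)
  then have "\<forall>k. (if k = i then 1 else 0) = (0::int)"
    using simple_roots_indep unfolding lin_indep_def by blast
  then show False by (metis one_neq_zero)
qed

lemma roots_nonzero: "r \<in> roots al alv \<Longrightarrow> r \<noteq> (\<lambda>_. 0)"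
proof
  assume "r \<in> roots al alv" "r = (\<lambda>_. 0)"
  then obtain ws i where "actX al alv ws (al i) = actX al alv ws (\<lambda>_. 0)"
    unfolding roots_def by (auto simp: actX_zero)
  then show False using simple_root_nonzero actX_inj by blast
qed

lemma rootsI: "actX al alv ws (al i) \<in> roots al alv"
  unfolding roots_def by blast

lemma simple_root_in_roots: "al i \<in> roots al alv"
  using rootsI[of "[]"] by simp

lemma roots_actX: "r \<in> roots al alv \<Longrightarrow> actX al alv ws r \<in> roots al alv"
proof -
  assume "r \<in> roots al alv"
  then obtain ws' i where "r = actX al alv ws' (al i)" unfolding roots_def by auto
  then have "actX al alv ws r = actX al alv (ws' @ ws) (al i)" by (simp add: actX_append)
  then show ?thesis by (simp only: rootsI)
qed

lemma roots_uminus: "r \<in> roots al alv \<Longrightarrow> (\<lambda>j. - r j) \<in> roots al alv"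
proof -
  assume "r \<in> roots al alv"
  then obtain ws i where "r = actX al alv ws (al i)" unfolding roots_def by auto
  then have "(\<lambda>j. - r j) = actX al alv (i # ws) (al i)"
    by (simp add: actX_Cons rX_simple_root actX_uminus)
  then show ?thesis by (simp only: rootsI)
qed

lemma roots_lincomb: "r \<in> roots al alv \<Longrightarrow> \<exists>c. r = lincomb c al"
proof -
  assume "r \<in> roots al alv"
  then obtain ws i where r: "r = actX al alv ws (al i)" unfolding roots_def by auto
  obtain d where "actX al alv ws (lincomb (\<lambda>k. if k = i then 1 else 0) al) = lincomb d al"
    using actX_lincomb by blast
  then show ?thesis unfolding r lincomb_unit by blast
qed

lemma pos_roots_iff: "x \<in> pos_roots al alv \<longleftrightarrow> x \<in> roots al alv \<and> pos_cone al x"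
  unfolding pos_roots_def pos_cone_def by auto

lemma neg_roots_iff: "x \<in> neg_roots al alv \<longleftrightarrow> x \<in> roots al alv \<and> pos_cone al (\<lambda>j. - x j)"
  unfolding neg_roots_def pos_cone_uminus_iff by auto

lemma neg_roots_uminus_iff: "(\<lambda>j. - x j) \<in> neg_roots al alv \<longleftrightarrow> x \<in> pos_roots al alv"
proof -
  have "(\<lambda>j. - x j) \<in> roots al alv \<longleftrightarrow> x \<in> roots al alv"
    using roots_uminus[of x] roots_uminus[of "\<lambda>j. - x j"] by auto
  then show ?thesis unfolding neg_roots_iff pos_roots_iff by simp
qed

lemma pos_roots_neg_roots_disjoint: "x \<in> pos_roots al alv \<Longrightarrow> x \<notin> neg_roots al alv"
  using pos_cone_antisym[OF simple_roots_indep] roots_nonzero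
  unfolding pos_roots_iff neg_roots_iff by blast

lemma simple_root_pos: "al i \<in> pos_roots al alv"
  using simple_root_in_roots pos_cone_unit pos_roots_iff by blast

lemma uminus_simple_root_not_pos: "(\<lambda>j. - al i j) \<notin> pos_roots al alv"
  using simple_root_pos pos_roots_neg_roots_disjoint neg_roots_uminus_iff by blast

lemma root_multiple_simple:
  assumes "r \<in> roots al alv" "r = (\<lambda>j. c * al k j)"
  shows "c = 1 \<or> c = -1"
proof -
  obtain ws m where r: "r = actX al alv ws (al m)" using assms(1) unfolding roots_def by auto
  obtain d where d: "actX al alv (rev ws) (al k) = lincomb d al"
    using roots_lincomb[OF rootsI] by blast
  have "lincomb (\<lambda>i. if i = m then 1 else 0) al = actX al alv (rev ws) r"
    by (simp add: r lincomb_unit)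
  also have "\<dots> = actX al alv (rev ws) (\<lambda>j. c * al k j + 0 * al k j)" using assms(2) by simp
  also have "\<dots> = lincomb (\<lambda>i. c * d i) al" by (simp only: actX_lin d) (simp add: lincomb_smult)
  finally have "(\<lambda>i. if i = m then 1 else 0) = (\<lambda>i. c * d i)"
    using lincomb_inj simple_roots_indep by blast
  then have "c * d m = 1" by (metis (mono_tags))
  then show ?thesis unfolding zmult_eq_1_iff by blast
qed

section \<open>Rank 2 subsystems\<close>

abbreviation rank2_root_coeffs :: "'i \<Rightarrow> 'i \<Rightarrow> nat \<Rightarrow> int \<times> int" where
  "rank2_root_coeffs s s' \<equiv> rank2_coeffs (- pair (alv s) (al s')) (- pair (alv s') (al s))"

lemma actX_alt_word_simple_root:
  "actX al alv (alt_word s' s n) (al s)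
     = (\<lambda>j. fst (rank2_root_coeffs s s' n) * al s j + snd (rank2_root_coeffs s s' n) * al s' j)"
proof (induction n)
  case 0
  then show ?case by simp
next
  case (Suc n)
  define x y where "x = fst (rank2_root_coeffs s s' n)" and "y = snd (rank2_root_coeffs s s' n)"
  define t where "t = (if even n then s' else s)"
  have "actX al alv (alt_word s' s (Suc n)) (al s) = rX al alv t (\<lambda>j. x * al s j + y * al s' j)"
    unfolding alt_word_snoc actX_snoc Suc.IH x_def y_def t_def by simp
  also have "\<dots> = (\<lambda>j. x * rX al alv t (al s) j + y * rX al alv t (al s') j)"
    by (rule rX_lin)
  finally show ?case
    by (auto simp: t_def x_def y_def rX_def algebra_simps)
qed

lemma actY_alt_word_simple_coroot:
  "actY al alv (alt_word s' s n) (alv s)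
     = (\<lambda>j. fst (rank2_coeffs (- pair (alv s') (al s)) (- pair (alv s) (al s')) n) * alv s j
          + snd (rank2_coeffs (- pair (alv s') (al s)) (- pair (alv s) (al s')) n) * alv s' j)"
  using km_root_datum.actX_alt_word_simple_root[OF dual_root_datum, of s' s n]
  by (simp add: actY_eq_actX_dual pair_commute)

lemma rank2_root_coeffs_no_mixed_signs:
  "s \<noteq> s' \<Longrightarrow> \<not> fst (rank2_root_coeffs s s' n) * snd (rank2_root_coeffs s s' n) < 0"
  by (rule rank2_coeffs_no_mixed_signs)
    (use cartan_offdiag_nonpos[of s s'] cartan_offdiag_nonpos[of s' s] cartan_zero_sym[of s s']
      in auto)

lemma rank2_root_coeffs_at_sign_change:
  assumes "s \<noteq> s'"
    and "0 \<le> fst (rank2_root_coeffs s s' m)" "0 \<le> snd (rank2_root_coeffs s s' m)"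
    and "\<not> (0 \<le> fst (rank2_root_coeffs s s' (Suc m)) \<and> 0 \<le> snd (rank2_root_coeffs s s' (Suc m)))"
  shows "rank2_root_coeffs s s' m = (if even m then (0, 1) else (1, 0))"
proof -
  define x y where "x = fst (rank2_root_coeffs s s' m)" and "y = snd (rank2_root_coeffs s s' m)"
  have root: "(\<lambda>j. x * al s j + y * al s' j) \<in> roots al alv"
    using rootsI[of "alt_word s' s m" s] by (simp add: actX_alt_word_simple_root x_def y_def)
  have no_mix: "\<not> fst (rank2_root_coeffs s s' (Suc m)) * snd (rank2_root_coeffs s s' (Suc m)) < 0"
    by (rule rank2_root_coeffs_no_mixed_signs[OF assms(1)])
  show ?thesis
  proof (cases "even m")
    case True
    then have "x = 0" "0 < y" using assms(2-4) no_mix unfolding x_def y_def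
      by (auto simp: mult_less_0_iff)
    then have "y = 1" using root_multiple_simple[of _ y s'] root by force
    then show ?thesis using True \<open>x = 0\<close> by (simp add: x_def y_def prod_eq_iff)
  next
    case False
    then have "y = 0" "0 < x" using assms(2-4) no_mix unfolding x_def y_def
      by (auto simp: mult_less_0_iff)
    then have "x = 1" using root_multiple_simple[of _ x s] root by force
    then show ?thesis using False \<open>y = 0\<close> by (simp add: x_def y_def prod_eq_iff)
  qed
qed

lemma alt_word_simple_at_sign_change:
  assumes "s \<noteq> s'" "rank2_root_coeffs s s' m = (if even m then (0, 1) else (1, 0))"
  defines "t \<equiv> if even m then s' else s"
  shows "actX al alv (alt_word s' s m) (al s) = al t"
    and "actY al alv (alt_word s' s m) (alv s) = alv t"
proof -
  define a b where "a = - pair (alv s) (al s')" and "b = - pair (alv s') (al s)"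
  have swap: "fst (rank2_coeffs b a m) = fst (rank2_root_coeffs s s' m)"
    "b * snd (rank2_coeffs b a m) = a * snd (rank2_root_coeffs s s' m)"
    using rank2_coeffs_swap[of a b m] by (simp_all add: a_def b_def)
  show root: "actX al alv (alt_word s' s m) (al s) = al t"
    using assms(2) by (simp add: actX_alt_word_simple_root t_def)
  have coroot: "actY al alv (alt_word s' s m) (alv s)
      = (\<lambda>j. fst (rank2_coeffs b a m) * alv s j + snd (rank2_coeffs b a m) * alv s' j)"
    unfolding a_def b_def by (rule actY_alt_word_simple_coroot)
  show "actY al alv (alt_word s' s m) (alv s) = alv t"
  proof (cases "even m")
    case True
    define d where "d = snd (rank2_coeffs b a m)"
    have cd: "actY al alv (alt_word s' s m) (alv s) = (\<lambda>j. d * alv s' j + 0 * alv s' j)"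
      using coroot swap(1) assms(2) True by (simp add: d_def)
    have "2 = pair (actY al alv (alt_word s' s m) (alv s)) (actX al alv (alt_word s' s m) (al s))"
      by (simp add: pair_actY_actX)
    also have "\<dots> = 2 * d" by (simp only: cd root pair_lin_left) (simp add: t_def True)
    finally show ?thesis using cd True by (simp add: t_def)
  next
    case False
    have "snd (rank2_coeffs b a m) = 0"
    proof (cases "b = 0")
      case True
      then have "a = 0"
        using cartan_zero_sym[of s s'] by (simp add: a_def b_def)
      then show ?thesis using True rank2_coeffs_zero by simp
    next
      case False
      then show ?thesis using swap(2) assms(2) \<open>odd m\<close> by simp
    qed
    then show ?thesis using coroot swap(1) assms(2) False by (simp add: t_def)
  qed
qed

text \<open>At a sign change the alternating word maps \<open>\<alpha>\<^sub>s\<close> to a simple root \<open>\<alpha>\<^sub>t\<close>, so conjugating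
  \<open>r\<^sub>s\<close> by it gives \<open>r\<^sub>t\<close>: this is the braid relation of the rank 2 subsystem.\<close>

lemma alt_word_braid:
  assumes "s \<noteq> s'" "rank2_root_coeffs s s' m = (if even m then (0, 1) else (1, 0))"
  shows "actX al alv (alt_word s' s (Suc m)) = actX al alv (s # alt_word s' s m)"
proof
  fix z
  define w t where "w = alt_word s' s m" and "t = (if even m then s' else s)"
  have conj: "actX al alv (rev w @ [s] @ w) = rX al alv t"
    using alt_word_simple_at_sign_change[OF assms]
    by (intro ext) (unfold actX_conj_simple, simp add: rX_def w_def t_def)
  have "actX al alv (alt_word s' s (Suc m)) z = rX al alv t (actX al alv w z)"
    unfolding alt_word_snoc actX_snoc t_def w_def by simp
  also have "\<dots> = actX al alv (rev w @ [s] @ w) (actX al alv w z)" by (simp only: conj)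
  also have "\<dots> = actX al alv (s # w) z" by (simp add: actX_append actX_Cons)
  finally show "actX al alv (alt_word s' s (Suc m)) z = actX al alv (s # alt_word s' s m) z"
    by (simp add: w_def)
qed

lemma rank2_reduced_word_alternating:
  assumes "s \<noteq> s'" and q: "set q \<subseteq> {s, s'}"
    and min_q: "\<And>q'. set q' \<subseteq> {s, s'} \<Longrightarrow> actX al alv q' = actX al alv q
                  \<Longrightarrow> length q \<le> length q'"
    and min_sq: "\<And>q'. set q' \<subseteq> {s, s'} \<Longrightarrow> actX al alv q' = actX al alv (s # q)
                  \<Longrightarrow> length q \<le> length q'"
  shows "q = alt_word s' s (length q)"
proof (rule alt_wordI)
  show "\<forall>k. Suc k < length q \<longrightarrow> q ! k \<noteq> q ! Suc k"
  proof (intro allI impI notI)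
    fix k assume k: "Suc k < length q" and eq: "q ! k = q ! Suc k"
    define q' where "q' = take k q @ drop (Suc (Suc k)) q"
    have "q = take k q @ q ! k # q ! Suc k # drop (Suc (Suc k)) q"
      using k by (metis Cons_nth_drop_Suc Suc_lessD append_take_drop_id)
    then have "actX al alv q = actX al alv q'" unfolding q'_def using eq
      by (metis actX_cancel_double)
    moreover have "set q' \<subseteq> {s, s'}" using q unfolding q'_def
      by (auto dest!: in_set_takeD in_set_dropD)
    ultimately show False using min_q[of q'] k by (simp add: q'_def)
  qed
  show "q \<noteq> [] \<longrightarrow> hd q = s'"
  proof
    assume "q \<noteq> []"
    then obtain c q'' where q_eq: "q = c # q''" by (cases q) auto
    have "c \<noteq> s"
    proof
      assume "c = s"
      then have "actX al alv (s # q) = actX al alv q''"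
        using q_eq actX_cancel_double[of "[]" s q''] by simp
      then show False using min_sq[of q''] q q_eq by simp
    qed
    then show "hd q = s'" using q q_eq by auto
  qed
qed (use assms in auto)

text \<open>The minimal word is alternating; at the first sign change of its coefficients the braid
  relation would shorten \<open>s # q\<close>.\<close>

lemma rank2_reduced_word_pos:
  assumes "s \<noteq> s'" and q: "set q \<subseteq> {s, s'}"
    and min_q: "\<And>q'. set q' \<subseteq> {s, s'} \<Longrightarrow> actX al alv q' = actX al alv q
                  \<Longrightarrow> length q \<le> length q'"
    and min_sq: "\<And>q'. set q' \<subseteq> {s, s'} \<Longrightarrow> actX al alv q' = actX al alv (s # q)
                  \<Longrightarrow> length q \<le> length q'"
  shows "\<exists>x y. 0 \<le> x \<and> 0 \<le> y \<and> actX al alv q (al s) = (\<lambda>j. x * al s j + y * al s' j)"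
proof -
  have q_alt: "q = alt_word s' s (length q)"
    by (rule rank2_reduced_word_alternating[OF assms])
  have "0 \<le> fst (rank2_root_coeffs s s' n) \<and> 0 \<le> snd (rank2_root_coeffs s s' n)"
    if "n \<le> length q" for n
    using that
  proof (induction n)
    case 0
    then show ?case by simp
  next
    case (Suc m)
    show ?case
    proof (rule ccontr)
      assume "\<not> ?case"
      then have sign_change: "rank2_root_coeffs s s' m = (if even m then (0, 1) else (1, 0))"
        using Suc by (intro rank2_root_coeffs_at_sign_change[OF assms(1)]) auto
      define w rest where "w = alt_word s' s m"
        and "rest = alt_word (if even (Suc m) then s' else s) (if even (Suc m) then s else s')
                       (length q - Suc m)"
      have len: "Suc m + (length q - Suc m) = length q" using Suc.prems by simp
      have "q = alt_word s' s (Suc m + (length q - Suc m))" unfolding len by (rule q_alt)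
      then have q_split: "q = alt_word s' s (Suc m) @ rest"
        unfolding alt_word_add rest_def .
      have "actX al alv (s # q) = actX al alv (w @ rest)"
      proof
        fix z
        have "actX al alv (s # q) z
            = actX al alv rest (actX al alv (alt_word s' s (Suc m)) (rX al alv s z))"
          by (simp add: q_split actX_Cons actX_append)
        also have "\<dots> = actX al alv (w @ rest) z"
          by (simp only: alt_word_braid[OF assms(1) sign_change] actX_Cons rX_rX actX_append w_def)
        finally show "actX al alv (s # q) z = actX al alv (w @ rest) z" .
      qed
      moreover have "set (w @ rest) \<subseteq> {s, s'}"
        using set_alt_word[of s' s m] set_alt_word[of s' s "length q - Suc m"]
          set_alt_word[of s s' "length q - Suc m"]
        by (auto simp: w_def rest_def)
      ultimately show False using min_sq[of "w @ rest"] Suc.prems by (simp add: w_def rest_def)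
    qed
  qed
  then have "0 \<le> fst (rank2_root_coeffs s s' (length q))"
    and "0 \<le> snd (rank2_root_coeffs s s' (length q))"
    by simp_all
  moreover have "actX al alv q (al s) = actX al alv (alt_word s' s (length q)) (al s)"
    using q_alt by simp
  ultimately show ?thesis unfolding actX_alt_word_simple_root by blast
qed

section \<open>Positivity of roots\<close>

text \<open>Choosing the factorization with \<open>p\<close> shortest ensures that no letter of \<open>S\<close> shortens \<open>p\<close>.\<close>

lemma parabolic_factorization:
  assumes red: "reduced_word al alv (q0 @ p0)" and "set q0 \<subseteq> S"
  obtains q p where "set q \<subseteq> S" "actX al alv (q @ p) = actX al alv (q0 @ p0)"
    "length (q @ p) = length (q0 @ p0)" "length p \<le> length p0"
    "\<And>c. c \<in> S \<Longrightarrow> length p \<le> wlen al alv (actX al alv (c # p))"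
proof -
  define A where "A = (\<lambda>(q, p). set q \<subseteq> S \<and> actX al alv (q @ p) = actX al alv (q0 @ p0)
                        \<and> length (q @ p) = length (q0 @ p0))"
  have "A (q0, p0)" using assms(2) by (simp add: A_def)
  then obtain qp where "A qp" and qp_min: "\<And>qp'. A qp' \<Longrightarrow> length (snd qp) \<le> length (snd qp')"
    using ex_has_least_nat[of A "(q0, p0)" "\<lambda>qp. length (snd qp)"] by blast
  obtain q p where qp: "qp = (q, p)" by (cases qp)
  have A_qp: "set q \<subseteq> S" "actX al alv (q @ p) = actX al alv (q0 @ p0)"
    "length (q @ p) = length (q0 @ p0)"
    using \<open>A qp\<close> by (auto simp: A_def qp)
  have min: "\<And>q' p'. A (q', p') \<Longrightarrow> length p \<le> length p'" using qp_min qp by fastforce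
  show thesis
  proof (rule that[OF A_qp])
    show "length p \<le> length p0" using min \<open>A (q0, p0)\<close> by blast
    show "length p \<le> wlen al alv (actX al alv (c # p))" if c: "c \<in> S" for c
    proof (rule ccontr)
      assume short: "\<not> length p \<le> wlen al alv (actX al alv (c # p))"
      obtain p' where p': "reduced_word al alv p'" "actX al alv p' = actX al alv (c # p)"
        using reduced_word_exists by blast
      have "actX al alv ((q @ [c]) @ p') = actX al alv (q @ p)"
        by (intro ext) (simp add: actX_append actX_snoc p'(2) actX_Cons)
      then have act: "actX al alv ((q @ [c]) @ p') = actX al alv (q0 @ p0)" using A_qp(2) by simp
      then have "length (q0 @ p0) \<le> length ((q @ [c]) @ p')" using reduced_word_le[OF red] by blast
      moreover have "length p' < length p" using short p' unfolding reduced_word_def by simp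
      ultimately have "A (q @ [c], p')" using A_qp c act unfolding A_def by auto
      then show False using min \<open>length p' < length p\<close> by fastforce
    qed
  qed
qed

lemma reduced_prefix_rank2_pos:
  assumes "s \<noteq> s'" and q: "set q \<subseteq> {s, s'}" and red: "reduced_word al alv (q @ p)"
    and le: "wlen al alv (actX al alv (q @ p)) \<le> wlen al alv (actX al alv (s # q @ p))"
  shows "\<exists>x y. 0 \<le> x \<and> 0 \<le> y \<and> actX al alv q (al s) = (\<lambda>j. x * al s j + y * al s' j)"
proof (rule rank2_reduced_word_pos[OF assms(1) q])
  fix q' assume "actX al alv q' = actX al alv q"
  then have "actX al alv (q' @ p) = actX al alv (q @ p)" by (intro ext) (simp add: actX_append)
  then show "length q \<le> length q'" using reduced_word_le[OF red] by fastforce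
next
  fix q' assume "actX al alv q' = actX al alv (s # q)"
  then have "actX al alv (q' @ p) = actX al alv (s # q @ p)"
    by (intro ext) (simp add: actX_append actX_Cons)
  then have "wlen al alv (actX al alv (s # q @ p)) \<le> length (q' @ p)" by (rule wlen_le_if_actX_eq)
  then show "length q \<le> length q'" using le red unfolding reduced_word_def by simp
qed

text \<open>For \<open>w = actX ws\<close> the word \<open>i # ws\<close> acts as \<open>w r\<^sub>i\<close>. The induction on \<open>\<ell>(w)\<close> splits a
  reduced word of \<open>w\<close> as \<open>q @ p\<close>, with \<open>q\<close> in the rank 2 subgroup generated by \<open>r\<^sub>i\<close> and the first
  letter, and \<open>p\<close> shortest.\<close>

theorem pos_cone_actX_simple_root:
  assumes "wlen al alv (actX al alv ws) \<le> wlen al alv (actX al alv (i # ws))"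
  shows "pos_cone al (actX al alv ws (al i))"
  using assms
proof (induction "wlen al alv (actX al alv ws)" arbitrary: ws i rule: less_induct)
  case less
  obtain ws0 where ws0: "reduced_word al alv ws0" "actX al alv ws0 = actX al alv ws"
    using reduced_word_exists by blast
  show ?case
  proof (cases ws0)
    case Nil
    then have "actX al alv ws (al i) = al i" using ws0(2) by (metis actX_Nil)
    then show ?thesis using pos_cone_unit by metis
  next
    case (Cons s' ws1)
    have len_ws: "wlen al alv (actX al alv ws) = Suc (length ws1)"
      using ws0 Cons unfolding reduced_word_def by simp
    have "s' \<noteq> i"
    proof
      assume "s' = i"
      then have "actX al alv (i # ws) = actX al alv ws1"
        using ws0(2) Cons by (intro ext) (metis actX_Cons rX_rX)
      then show False using less.prems len_ws wlen_le[of al alv ws1] by simp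
    qed
    obtain q p where q: "set q \<subseteq> {i, s'}" and qp: "actX al alv (q @ p) = actX al alv ws"
      and len_qp: "length (q @ p) = length ws0" and len_p: "length p \<le> length ws1"
      and p_min: "\<And>c. c \<in> {i, s'} \<Longrightarrow> length p \<le> wlen al alv (actX al alv (c # p))"
      using parabolic_factorization[of "[s']" ws1 "{i, s'}"] ws0 Cons by auto
    have red: "reduced_word al alv (q @ p)"
      using ws0 qp len_qp unfolding reduced_word_def by simp
    have "reduced_word al alv p" using reduced_word_infix[of al alv q p "[]"] red by simp
    then have pos_p: "pos_cone al (actX al alv p (al c))" if "c \<in> {i, s'}" for c
      using less.hyps[of p c] p_min[OF that] len_p len_ws unfolding reduced_word_def by simp
    have qp_fun: "actX al alv ws z = actX al alv p (actX al alv q z)" for z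
      using qp by (metis actX_append)
    have "actX al alv (i # q @ p) = actX al alv (i # ws)"
      by (intro ext) (simp add: actX_Cons actX_append qp_fun)
    then obtain x y where "0 \<le> x" "0 \<le> y"
      and q_root: "actX al alv q (al i) = (\<lambda>j. x * al i j + y * al s' j)"
      using reduced_prefix_rank2_pos[OF \<open>s' \<noteq> i\<close>[symmetric] q red] less.prems qp by auto
    have "actX al alv ws (al i) = (\<lambda>j. x * actX al alv p (al i) j + y * actX al alv p (al s') j)"
      by (simp add: qp_fun q_root actX_lin)
    then show ?thesis using pos_cone_comb[OF pos_p pos_p \<open>0 \<le> x\<close> \<open>0 \<le> y\<close>] by simp
  qed
qed

lemma reduced_word_Cons_pos:
  assumes "reduced_word al alv (c # post)"
  shows "actX al alv post (al c) \<in> pos_roots al alv"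
proof -
  have "wlen al alv (actX al alv post) \<le> wlen al alv (actX al alv (c # post))"
    using assms wlen_le[of al alv post] unfolding reduced_word_def by simp
  then show ?thesis using pos_cone_actX_simple_root rootsI pos_roots_iff by blast
qed

lemma reduced_word_rev:
  assumes "reduced_word al alv ws"
  shows "reduced_word al alv (rev ws)"
proof (rule reduced_wordI)
  fix ws' assume eq: "actX al alv ws' = actX al alv (rev ws)"
  have "actX al alv (rev ws') = actX al alv ws"
  proof
    fix z
    have "actX al alv ws z = actX al alv ws (actX al alv ws' (actX al alv (rev ws') z))" by simp
    also have "\<dots> = actX al alv (rev ws') z" by (simp add: eq)
    finally show "actX al alv (rev ws') z = actX al alv ws z" ..
  qed
  then show "length (rev ws) \<le> length ws'" using reduced_word_le[OF assms] by fastforce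
qed

lemma neg_cone_actX_simple_root:
  assumes "wlen al alv (actX al alv (i # ws)) < wlen al alv (actX al alv ws)"
  shows "pos_cone al (\<lambda>j. - actX al alv ws (al i) j)"
proof -
  have "actX al alv (i # i # ws) = actX al alv ws" by (intro ext) (simp add: actX_Cons)
  then have "pos_cone al (actX al alv (i # ws) (al i))"
    using assms by (intro pos_cone_actX_simple_root) simp
  then show ?thesis by (simp add: actX_Cons rX_simple_root actX_uminus)
qed

lemma actX_simple_root_pos_or_neg:
  "actX al alv ws (al i) \<in> pos_roots al alv \<or> actX al alv ws (al i) \<in> neg_roots al alv"
proof (cases "wlen al alv (actX al alv ws) \<le> wlen al alv (actX al alv (i # ws))")
  case True
  then show ?thesis using pos_cone_actX_simple_root rootsI pos_roots_iff by blast
next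
  case False
  then show ?thesis using neg_cone_actX_simple_root rootsI neg_roots_iff by simp
qed

lemma roots_pos_or_neg: "r \<in> roots al alv \<Longrightarrow> r \<in> pos_roots al alv \<or> r \<in> neg_roots al alv"
  unfolding roots_def using actX_simple_root_pos_or_neg by blast

lemma actX_eq_id_if_pos:
  assumes "\<And>i. pos_cone al (actX al alv ws (al i))"
  shows "actX al alv ws z = z"
proof -
  obtain ws0 where ws0: "reduced_word al alv ws0" "actX al alv ws0 = actX al alv ws"
    using reduced_word_exists by blast
  show ?thesis
  proof (cases ws0)
    case Nil
    then show ?thesis using ws0(2) by (metis actX_Nil)
  next
    case (Cons i ws1)
    have "actX al alv (i # ws) = actX al alv ws1"
      using ws0(2) Cons by (intro ext) (metis actX_Cons rX_rX)
    then have "wlen al alv (actX al alv (i # ws)) < wlen al alv (actX al alv ws)"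
      using wlen_le[of al alv ws1] ws0 Cons unfolding reduced_word_def by simp
    then have "actX al alv ws (al i) = (\<lambda>_. 0)"
      using neg_cone_actX_simple_root assms pos_cone_antisym[OF simple_roots_indep] by blast
    then show ?thesis using rootsI roots_nonzero by metis
  qed
qed

text \<open>\<open>r\<^sub>j\<close> changes only the \<open>\<alpha>\<^sub>j\<close>-coordinate, so the only positive root it makes negative is
  \<open>\<alpha>\<^sub>j\<close> itself.\<close>

lemma rX_pos_root_neg_imp_simple:
  assumes pos: "z \<in> pos_roots al alv" and neg: "rX al alv j z \<in> neg_roots al alv"
  shows "z = al j"
proof -
  obtain c where c: "z = lincomb c al" using pos unfolding pos_roots_def by auto
  have c_pos: "\<forall>i. 0 \<le> c i"
    using pos unfolding pos_roots_iff c pos_cone_lincomb_iff[OF simple_roots_indep] by blast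
  have "\<forall>i. c i - (if i = j then pair (alv j) z else 0) \<le> 0"
    using neg
    unfolding neg_roots_iff c rX_lincomb pos_cone_uminus_lincomb_iff[OF simple_roots_indep]
    by blast
  then have "c = (\<lambda>k. if k = j then c j else 0)" using c_pos by (metis antisym diff_zero)
  then have z: "z = (\<lambda>m. c j * al j m)" by (metis c lincomb_single)
  then have "c j = 1 \<or> c j = -1" using root_multiple_simple pos unfolding pos_roots_def by blast
  then have "c j = 1" using c_pos by (metis neg_0_le_iff_le not_one_le_zero)
  then show ?thesis using z by simp
qed

lemma rX_pos_root:
  assumes "g \<in> pos_roots al alv" "g \<noteq> al i"
  shows "rX al alv i g \<in> pos_roots al alv"
proof -
  have "rX al alv i g \<in> roots al alv"
    using roots_actX[of g "[i]"] assms(1) unfolding pos_roots_def by (simp add: actX_Cons)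
  then show ?thesis using roots_pos_or_neg rX_pos_root_neg_imp_simple assms by blast
qed

text \<open>If \<open>ws\<close> acts as a reflection along \<open>\<alpha>\<^sub>j\<close>, then \<open>j # ws\<close> maps every simple root to a
  positive root, hence is trivial, so that reflection is \<open>r\<^sub>j\<close>.\<close>

lemma coroot_eq_if_reflection:
  assumes c: "pair c (al j) = 2" and ws: "\<And>z. actX al alv ws z = (\<lambda>m. z m - pair c z * al j m)"
  shows "c = alv j"
proof -
  have pos: "pos_cone al (actX al alv (j # ws) (al k))" for k
  proof (cases "k = j")
    case True
    then have "actX al alv (j # ws) (al k) = al j"
      by (simp add: actX_Cons ws rX_simple_root pair_uminus_right c)
    then show ?thesis using pos_cone_unit by metis
  next
    case False
    define e where "e = pair (alv j) (al k) + pair c (rX al alv j (al k))"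
    define d where "d = (\<lambda>l. (if l = k then 1 else 0) - (if l = j then e else (0::int)))"
    have eq: "actX al alv (j # ws) (al k) = lincomb d al"
      by (auto simp: d_def actX_Cons ws lincomb_diff lincomb_single lincomb_unit rX_def e_def
          algebra_simps)
    have "\<not> pos_cone al (\<lambda>m. - lincomb d al m)"
      unfolding pos_cone_uminus_lincomb_iff[OF simple_roots_indep] using False by (auto simp: d_def)
    then show ?thesis using roots_pos_or_neg[OF rootsI, of "j # ws" k]
      unfolding pos_roots_iff neg_roots_iff eq by blast
  qed
  have refl: "pair c z * al j m = pair (alv j) z * al j m" for z m
  proof -
    have "rX al alv j z = actX al alv ws z"
      using actX_eq_id_if_pos[OF pos, of "rX al alv j z"] by (simp add: actX_Cons)
    then have "rX al alv j z m = actX al alv ws z m" by simp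
    then show ?thesis by (simp add: ws rX_def) (metis mult.commute)
  qed
  obtain m where "al j m \<noteq> 0" using simple_root_nonzero by fastforce
  then have "pair c z = pair (alv j) z" for z using refl[of z m] by simp
  then show ?thesis by (metis pair_unit_right ext)
qed

lemma actY_simple_coroot_if_simple_root:
  assumes "actX al alv w (al i) = al j"
  shows "actY al alv w (alv i) = alv j"
proof (rule coroot_eq_if_reflection)
  show "pair (actY al alv w (alv i)) (al j) = 2"
    using pair_actY_actX[of w "alv i" "al i"] assms by simp
  show "actX al alv (rev w @ [i] @ w) z = (\<lambda>m. z m - pair (actY al alv w (alv i)) z * al j m)" for z
    unfolding actX_conj_simple assms ..
qed

theorem actY_coroot_well_defined:
  assumes "actX al alv u (al i) = actX al alv v (al j)"
  shows "actY al alv u (alv i) = actY al alv v (alv j)"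
proof -
  have "actX al alv (u @ rev v) (al i) = al j" by (simp add: actX_append assms)
  then have "actY al alv (u @ rev v) (alv i) = alv j" by (rule actY_simple_coroot_if_simple_root)
  then have "actX alv al v (actX alv al (rev v) (actY al alv u (alv i))) = actY al alv v (alv j)"
    by (simp add: actY_eq_actX_dual actX_append)
  then show ?thesis by (simp add: km_root_datum.actX_actX_rev[OF dual_root_datum] actY_eq_actX_dual)
qed

section \<open>Inversion sets\<close>

lemma rX_eq_simple_root_iff: "rX al alv i g = al i \<longleftrightarrow> g = (\<lambda>j. - al i j)"
proof
  assume "rX al alv i g = al i"
  then have "g = rX al alv i (al i)" using rX_rX[of i g] by simp
  then show "g = (\<lambda>j. - al i j)" by (simp add: rX_simple_root)
next
  assume "g = (\<lambda>j. - al i j)"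
  then show "rX al alv i g = al i" using rX_rX[of i "al i"] by (simp add: rX_simple_root)
qed

lemma simple_root_notin_rX_image_Inv: "al i \<notin> rX al alv i ` Inv al alv w"
proof
  assume "al i \<in> rX al alv i ` Inv al alv w"
  then obtain g where "g \<in> pos_roots al alv" "rX al alv i g = al i" unfolding Inv_def by auto
  then show False unfolding rX_eq_simple_root_iff using uminus_simple_root_not_pos by simp
qed

lemma Inv_actX_Cons:
  "Inv al alv (actX al alv (i # ws)) = rX al alv i ` (Inv al alv (actX al alv ws) - {al i})
     \<union> (if actX al alv ws (al i) \<in> pos_roots al alv then {al i} else {})"
  (is "?L = ?R")
proof
  show "?L \<subseteq> ?R"
  proof
    fix g assume "g \<in> ?L"
    then have g_pos: "g \<in> pos_roots al alv"
      and g_neg: "actX al alv ws (rX al alv i g) \<in> neg_roots al alv"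
      unfolding Inv_def by (auto simp: actX_Cons)
    show "g \<in> ?R"
    proof (cases "g = al i")
      case True
      then show ?thesis
        using g_neg by (simp add: rX_simple_root actX_uminus neg_roots_uminus_iff)
    next
      case False
      then have "rX al alv i g \<in> Inv al alv (actX al alv ws) - {al i}"
        using rX_pos_root[OF g_pos] g_neg g_pos rX_eq_simple_root_iff uminus_simple_root_not_pos
        unfolding Inv_def by auto
      then have "rX al alv i (rX al alv i g) \<in> rX al alv i ` (Inv al alv (actX al alv ws) - {al i})"
        by blast
      then show ?thesis by simp
    qed
  qed
next
  show "?R \<subseteq> ?L"
  proof
    fix g assume g: "g \<in> ?R"
    show "g \<in> ?L"
    proof (cases "g \<in> rX al alv i ` (Inv al alv (actX al alv ws) - {al i})")
      case True
      then obtain h where h: "h \<in> Inv al alv (actX al alv ws)" "h \<noteq> al i" "g = rX al alv i h"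
        by blast
      then show ?thesis using rX_pos_root unfolding Inv_def by (auto simp: actX_Cons)
    next
      case False
      then have "g = al i" "actX al alv ws (al i) \<in> pos_roots al alv"
        using g by (auto split: if_splits)
      then show ?thesis
        using simple_root_pos unfolding Inv_def
        by (simp add: actX_Cons rX_simple_root actX_uminus neg_roots_uminus_iff)
    qed
  qed
qed

lemma Inv_id: "Inv al alv (\<lambda>x. x) = {}"
  unfolding Inv_def using pos_roots_neg_roots_disjoint by auto

lemma finite_Inv_actX: "finite (Inv al alv (actX al alv ws))"
  by (induction ws) (simp_all add: Inv_id Inv_actX_Cons)

lemma simple_root_in_Inv_iff:
  "al i \<in> Inv al alv (actX al alv ws) \<longleftrightarrow> actX al alv ws (al i) \<notin> pos_roots al alv"
  unfolding Inv_def using actX_simple_root_pos_or_neg pos_roots_neg_roots_disjoint simple_root_pos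
  by blast

lemma card_Inv_reduced_word:
  "reduced_word al alv ws \<Longrightarrow> card (Inv al alv (actX al alv ws)) = length ws"
proof (induction ws)
  case Nil
  then show ?case by (simp add: Inv_id)
next
  case (Cons i ws)
  have red: "reduced_word al alv ws"
    using reduced_word_infix[of al alv "[i]" ws "[]"] Cons.prems by simp
  have "actX al alv ws (al i) \<in> pos_roots al alv"
    using Cons.prems by (rule reduced_word_Cons_pos)
  then have "Inv al alv (actX al alv (i # ws))
      = insert (al i) (rX al alv i ` Inv al alv (actX al alv ws))"
    using simple_root_in_Inv_iff by (auto simp: Inv_actX_Cons)
  moreover have
    "card (rX al alv i ` Inv al alv (actX al alv ws)) = card (Inv al alv (actX al alv ws))"
    by (rule card_image) (rule inj_on_subset[OF rX_inj subset_UNIV])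
  ultimately show ?case
    using Cons.IH[OF red] finite_Inv_actX simple_root_notin_rX_image_Inv by simp
qed

lemma ht_lincomb: "ht alv (lincomb N alv) = (\<Sum>i\<in>UNIV. N i)"
proof -
  have "(THE M. lincomb N alv = lincomb M alv) = N"
    by (rule the_equality) (auto dest: lincomb_inj[OF simple_coroots_indep])
  then show ?thesis unfolding ht_def by simp
qed

lemma ht_rY:
  "ht alv (rY al alv k (lincomb N alv)) = ht alv (lincomb N alv) - pair (lincomb N alv) (al k)"
proof -
  have comm: "pair (al k) (lincomb N alv) = pair (lincomb N alv) (al k)" by (rule pair_commute)
  have "rY al alv k (lincomb N alv)
      = lincomb (\<lambda>i. N i - (if i = k then pair (lincomb N alv) (al k) else 0)) alv"
    using rX_lincomb[of alv al k N] unfolding rY_eq_rX_dual comm .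
  then show ?thesis by (simp add: ht_lincomb sum_subtractf)
qed

text \<open>Telescoping the height along a word: each letter \<open>r\<^sub>i\<close> lowers the height of a coweight
  \<open>y\<close> by \<open>\<langle>y, \<alpha>\<^sub>i\<rangle>\<close>, and the inversion set records exactly these contributions.\<close>

lemma sum_Inv_pair:
  "(\<Sum>g\<in>Inv al alv (actX al alv ws). pair (lincomb N alv) g)
     = ht alv (lincomb N alv) - ht alv (actY al alv ws (lincomb N alv))"
proof (induction ws arbitrary: N)
  case Nil
  then show ?case by (simp add: Inv_id actY_def)
next
  case (Cons i ws)
  define y where "y = lincomb N alv"
  obtain N' where N': "rY al alv i y = lincomb N' alv"
    using actX_lincomb[of alv al "[i]" N] by (auto simp: y_def rY_eq_rX_dual actX_Cons)
  define S where "S = Inv al alv (actX al alv ws)"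
  have IH: "(\<Sum>g\<in>S. pair (rY al alv i y) g)
      = ht alv (rY al alv i y) - ht alv (actY al alv ws (rY al alv i y))"
    using Cons.IH[of N'] by (simp add: N' S_def)
  have ht_y: "ht alv (rY al alv i y) = ht alv y - pair y (al i)" unfolding y_def by (rule ht_rY)
  have act: "actY al alv (i # ws) y = actY al alv ws (rY al alv i y)" by (simp add: actY_def)
  have reindex: "(\<Sum>g\<in>rX al alv i ` T. pair y g) = (\<Sum>h\<in>T. pair (rY al alv i y) h)" for T
    by (subst sum.reindex[OF inj_on_subset[OF rX_inj]]) (simp_all add: pair_rX_right)
  have fin: "finite S" unfolding S_def by (rule finite_Inv_actX)
  show ?case
  proof (cases "actX al alv ws (al i) \<in> pos_roots al alv")
    case True
    then have "Inv al alv (actX al alv (i # ws)) = insert (al i) (rX al alv i ` S)"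
      using simple_root_in_Inv_iff by (auto simp: Inv_actX_Cons S_def)
    moreover have "al i \<notin> rX al alv i ` S"
      unfolding S_def by (rule simple_root_notin_rX_image_Inv)
    ultimately have "(\<Sum>g\<in>Inv al alv (actX al alv (i # ws)). pair y g)
        = pair y (al i) + (\<Sum>g\<in>rX al alv i ` S. pair y g)"
      using fin by simp
    also have "\<dots> = pair y (al i) + (\<Sum>h\<in>S. pair (rY al alv i y) h)" by (simp only: reindex)
    finally show ?thesis using IH ht_y act by (simp add: y_def)
  next
    case False
    then have "al i \<in> S" "Inv al alv (actX al alv (i # ws)) = rX al alv i ` (S - {al i})"
      using simple_root_in_Inv_iff by (auto simp: Inv_actX_Cons S_def)
    then have "(\<Sum>g\<in>Inv al alv (actX al alv (i # ws)). pair y g)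
        = (\<Sum>h\<in>S - {al i}. pair (rY al alv i y) h)"
      by (simp only: reindex)
    also have "\<dots> = (\<Sum>h\<in>S. pair (rY al alv i y) h) - pair (rY al alv i y) (al i)"
      using fin \<open>al i \<in> S\<close> by (simp add: sum_diff1)
    finally show ?thesis using IH ht_y act pair_rY_simple_root by (simp add: y_def)
  qed
qed

lemma Inv_reduced_word_letter:
  assumes "reduced_word al alv (pre @ [c] @ post)"
  shows "actX al alv (rev pre) (al c) \<in> Inv al alv (actX al alv (pre @ [c] @ post))"
proof -
  have "reduced_word al alv (c # rev pre)"
    using reduced_word_rev[OF reduced_word_infix[of al alv "[]" "pre @ [c]" post]] assms by simp
  then have pos: "actX al alv (rev pre) (al c) \<in> pos_roots al alv"
    by (rule reduced_word_Cons_pos)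
  have "reduced_word al alv (c # post)"
    using reduced_word_infix[of al alv pre "c # post" "[]"] assms by simp
  then have "actX al alv post (al c) \<in> pos_roots al alv" by (rule reduced_word_Cons_pos)
  moreover have "actX al alv (pre @ [c] @ post) (actX al alv (rev pre) (al c))
      = (\<lambda>j. - actX al alv post (al c) j)"
    by (simp add: actX_append actX_Cons rX_simple_root actX_uminus)
  ultimately show ?thesis using pos unfolding Inv_def by (simp add: neg_roots_uminus_iff)
qed

section \<open>Reflections along roots\<close>

lemma coroot_actX: "coroot al alv (actX al alv ws (al i)) = actY al alv ws (alv i)"
proof -
  have "\<exists>c ws' i'. actX al alv ws' (al i') = actX al alv ws (al i) \<and> c = actY al alv ws' (alv i')"
    by blast
  then have "\<exists>ws' i'. actX al alv ws' (al i') = actX al alv ws (al i)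
      \<and> coroot al alv (actX al alv ws (al i)) = actY al alv ws' (alv i')"
    unfolding coroot_def by (rule someI_ex)
  then obtain ws' i' where eq: "actX al alv ws' (al i') = actX al alv ws (al i)"
    and c: "coroot al alv (actX al alv ws (al i)) = actY al alv ws' (alv i')"
    by blast
  show ?thesis unfolding c by (rule actY_coroot_well_defined[OF eq])
qed

lemma pair_coroot_root: "b \<in> roots al alv \<Longrightarrow> pair (coroot al alv b) b = 2"
  unfolding roots_def by (auto simp: coroot_actX pair_actY_actX)

lemma sref_actX: "sref al alv (actX al alv ws (al i)) = actX al alv (rev ws @ [i] @ ws)"
proof -
  have "\<exists>f ws' i'. actX al alv ws' (al i') = actX al alv ws (al i)
      \<and> f = actX al alv ws' \<circ> rX al alv i' \<circ> actX al alv (rev ws')"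
    by blast
  then have "\<exists>ws' i'. actX al alv ws' (al i') = actX al alv ws (al i)
      \<and> sref al alv (actX al alv ws (al i))
          = actX al alv ws' \<circ> rX al alv i' \<circ> actX al alv (rev ws')"
    unfolding sref_def by (rule someI_ex)
  then obtain ws' i' where eq: "actX al alv ws' (al i') = actX al alv ws (al i)"
    and s: "sref al alv (actX al alv ws (al i))
      = actX al alv ws' \<circ> rX al alv i' \<circ> actX al alv (rev ws')"
    by blast
  show ?thesis
  proof
    fix z
    have "sref al alv (actX al alv ws (al i)) z = actX al alv (rev ws' @ [i'] @ ws') z"
      by (simp add: s actX_append actX_Cons)
    also have "\<dots> = actX al alv (rev ws @ [i] @ ws) z"
      unfolding actX_conj_simple eq actY_coroot_well_defined[OF eq] ..
    finally show "sref al alv (actX al alv ws (al i)) z = actX al alv (rev ws @ [i] @ ws) z" .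
  qed
qed

lemma sref_apply:
  assumes "b \<in> roots al alv"
  shows "sref al alv b z = (\<lambda>j. z j - pair (coroot al alv b) z * b j)"
proof -
  obtain ws i where b: "b = actX al alv ws (al i)" using assms unfolding roots_def by blast
  show ?thesis unfolding b sref_actX coroot_actX actX_conj_simple ..
qed

lemma sref_root_uminus: "b \<in> roots al alv \<Longrightarrow> sref al alv b b = (\<lambda>j. - b j)"
  unfolding sref_apply by (simp add: pair_coroot_root)

lemma sref_sref:
  assumes b: "b \<in> roots al alv"
  shows "sref al alv b (sref al alv b z) = z"
proof -
  have "pair (coroot al alv b) (sref al alv b z) = - pair (coroot al alv b) z"
    using pair_coroot_root[OF b] by (simp add: sref_apply[OF b] pair_diff_right)
  then show ?thesis
    by (simp add: sref_apply[OF b, of "sref al alv b z"]) (simp add: sref_apply[OF b])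
qed

lemma sref_in_weyl: "b \<in> roots al alv \<Longrightarrow> \<exists>ws. actX al alv ws = sref al alv b"
proof -
  assume "b \<in> roots al alv"
  then obtain ws i where "b = actX al alv ws (al i)" unfolding roots_def by blast
  then have "sref al alv b = actX al alv (rev ws @ [i] @ ws)" using sref_actX[of ws i] by simp
  then show ?thesis by (intro exI[of _ "rev ws @ [i] @ ws"]) (rule sym)
qed

lemma actY_coroot_if_actX_sref:
  assumes b: "b \<in> roots al alv" and p: "actX al alv p = sref al alv b"
  shows "actY al alv p (coroot al alv b) = (\<lambda>j. - coroot al alv b j)"
proof (rule pair_left_inj)
  fix z
  have inv: "actX al alv (rev p) z = sref al alv b z"
    using actX_actX_rev[of p z] sref_sref[OF b, of "actX al alv (rev p) z"] by (simp add: p)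
  have "pair (actY al alv p (coroot al alv b)) z
      = pair (actY al alv p (coroot al alv b)) (actX al alv p (actX al alv (rev p) z))"
    by simp
  also have "\<dots> = pair (coroot al alv b) (sref al alv b z)" by (simp only: pair_actY_actX inv)
  also have "\<dots> = pair (\<lambda>j. - coroot al alv b j) z"
    by (simp add: sref_apply[OF b] pair_diff_right pair_coroot_root[OF b] pair_commute[of _ z]
        pair_uminus_right)
  finally show "pair (actY al alv p (coroot al alv b)) z = pair (\<lambda>j. - coroot al alv b j) z" .
qed

lemma coroot_lincomb: "b \<in> roots al alv \<Longrightarrow> \<exists>N. coroot al alv b = lincomb N alv"
  unfolding roots_def
  using km_root_datum.roots_lincomb[OF dual_root_datum] km_root_datum.rootsI[OF dual_root_datum]
  by (auto simp: coroot_actX actY_eq_actX_dual)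

lemma card_Inv_eq_wlen: "card (Inv al alv (actX al alv ws)) = wlen al alv (actX al alv ws)"
proof -
  obtain ws' where "reduced_word al alv ws'" "actX al alv ws' = actX al alv ws"
    using reduced_word_exists by blast
  then show ?thesis using card_Inv_reduced_word unfolding reduced_word_def by metis
qed

lemma sum_pair_coroot_Inv_sref:
  assumes b: "b \<in> roots al alv"
  shows "(\<Sum>g\<in>Inv al alv (sref al alv b). pair (coroot al alv b) g) = 2 * ht alv (coroot al alv b)"
proof -
  obtain p where p: "actX al alv p = sref al alv b" using sref_in_weyl[OF b] by blast
  obtain N where N: "coroot al alv b = lincomb N alv" using coroot_lincomb[OF b] by blast
  have "actY al alv p (coroot al alv b) = lincomb (\<lambda>i. - N i) alv"
    using actY_coroot_if_actX_sref[OF b p] by (simp add: N lincomb_uminus)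
  then have "ht alv (actY al alv p (coroot al alv b)) = - ht alv (coroot al alv b)"
    by (simp add: N ht_lincomb sum_negf)
  then show ?thesis using sum_Inv_pair[where ws = p and N = N] by (simp add: p N)
qed

text \<open>Since \<open>s\<^sub>\<beta> \<gamma> = \<gamma> - \<langle>\<beta>\<^sup>\<or>, \<gamma>\<rangle> \<beta>\<close>, a positive root \<open>\<gamma>\<close> can only become negative if
  \<open>\<langle>\<beta>\<^sup>\<or>, \<gamma>\<rangle> > 0\<close>.\<close>

lemma pair_coroot_Inv_sref_pos:
  assumes b: "b \<in> pos_roots al alv" and g: "g \<in> Inv al alv (sref al alv b)"
  shows "1 \<le> pair (coroot al alv b) g"
proof (rule ccontr)
  assume "\<not> 1 \<le> pair (coroot al alv b) g"
  then have "0 \<le> - pair (coroot al alv b) g" by simp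
  then have "pos_cone al (\<lambda>j. 1 * g j + (- pair (coroot al alv b) g) * b j)"
    using g b by (intro pos_cone_comb) (auto simp: Inv_def pos_roots_iff)
  moreover have "sref al alv b g = (\<lambda>j. 1 * g j + (- pair (coroot al alv b) g) * b j)"
    using b sref_apply unfolding pos_roots_def by auto
  ultimately have "pos_cone al (sref al alv b g)" by simp
  then show False using g pos_roots_neg_roots_disjoint unfolding Inv_def pos_roots_iff neg_roots_iff
    by blast
qed

theorem quantum_iff_wlen_sref:
  assumes b: "b \<in> pos_roots al alv"
  shows "quantum al alv b \<longleftrightarrow> int (wlen al alv (sref al alv b)) = 2 * ht alv (coroot al alv b) - 1"
proof -
  define S c where "S = Inv al alv (sref al alv b)" and "c = coroot al alv b"
  have b_root: "b \<in> roots al alv" using b unfolding pos_roots_def by blast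
  obtain p where p: "actX al alv p = sref al alv b" using sref_in_weyl[OF b_root] by blast
  have fin: "finite S" using finite_Inv_actX[of p] by (simp add: S_def p)
  have card: "card S = wlen al alv (sref al alv b)" using card_Inv_eq_wlen[of p]
    by (simp add: S_def p)
  have "b \<in> S" using b sref_root_uminus[OF b_root] neg_roots_uminus_iff unfolding S_def Inv_def
    by simp
  then have "0 < card S" using fin by (auto simp: card_gt_0_iff)
  then have card_rest: "int (card (S - {b})) = int (wlen al alv (sref al alv b)) - 1"
    using fin card \<open>b \<in> S\<close> by (simp add: of_nat_diff)
  have "(\<Sum>g\<in>S - {b}. pair c g) = 2 * ht alv c - 2"
    using sum_pair_coroot_Inv_sref[OF b_root] fin \<open>b \<in> S\<close> pair_coroot_root[OF b_root]
    by (simp add: S_def c_def sum_diff1)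
  then have sum_rest:
      "(\<Sum>g\<in>S - {b}. pair c g - 1) = 2 * ht alv c - 1 - int (wlen al alv (sref al alv b))"
    using card_rest by (simp add: sum_subtractf)
  have "quantum al alv b \<longleftrightarrow> (\<forall>g\<in>S - {b}. pair c g - 1 = 0)"
    using b unfolding quantum_def S_def c_def by auto
  also have "\<dots> \<longleftrightarrow> (\<Sum>g\<in>S - {b}. pair c g - 1) = 0"
  proof (rule sum_nonneg_eq_0_iff[symmetric])
    show "finite (S - {b})" using fin by simp
    show "0 \<le> pair c g - 1" if "g \<in> S - {b}" for g
      using pair_coroot_Inv_sref_pos[OF b, of g] that by (simp add: S_def c_def)
  qed
  finally show ?thesis using sum_rest by (auto simp: c_def)
qed

section \<open>Minimal expressions of roots\<close>

lemma word_reaches_simple_root: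
  assumes b: "b \<in> pos_roots al alv" and not_pos: "actX al alv p b \<notin> pos_roots al alv"
  obtains k where "k < length p" "actX al alv (take k p) b = al (p ! k)"
proof -
  define P where "P = (\<lambda>j. actX al alv (take j p) b \<notin> pos_roots al alv)"
  have "P (length p)" using not_pos by (simp add: P_def)
  define k where "k = (LEAST j. P j)"
  have Pk: "P k" unfolding k_def by (rule LeastI) fact
  have "k \<noteq> 0"
  proof
    assume "k = 0"
    then show False using Pk b by (simp add: P_def)
  qed
  then obtain k' where k': "k = Suc k'" by (cases k) auto
  have "k \<le> length p" unfolding k_def by (rule Least_le) fact
  then have k'_len: "k' < length p" using k' by simp
  have z_pos: "actX al alv (take k' p) b \<in> pos_roots al alv"
    using not_less_Least[of k' P] k' by (simp add: k_def P_def)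
  have "actX al alv (take k p) b = rX al alv (p ! k') (actX al alv (take k' p) b)"
    using k'_len by (simp add: k' take_Suc_conv_app_nth actX_snoc)
  moreover have "actX al alv (take k p) b \<in> roots al alv"
    using b roots_actX unfolding pos_roots_def by blast
  ultimately have "rX al alv (p ! k') (actX al alv (take k' p) b) \<in> neg_roots al alv"
    using Pk roots_pos_or_neg by (auto simp: P_def)
  then show thesis using that[OF k'_len] rX_pos_root_neg_imp_simple[OF z_pos] by blast
qed

text \<open>For \<open>\<beta> = r\<^bsub>i_L\<^esub> \<cdots> r\<^bsub>i_2\<^esub> \<alpha>\<^bsub>i_1\<^esub>\<close> the paper's minimality of \<open>L\<close> is
  \<open>minimal_root_word [i_2, \<dots>, i_L] i_1\<close>.\<close>

definition minimal_root_word :: "'i list \<Rightarrow> 'i \<Rightarrow> bool" where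
  "minimal_root_word ws i \<longleftrightarrow>
     (\<forall>ws' i'. actX al alv ws' (al i') = actX al alv ws (al i) \<longrightarrow> length ws \<le> length ws')"

text \<open>A word for \<open>s\<^sub>\<beta>\<close> must turn \<open>\<beta>\<close> into a simple root on the way from \<open>\<beta>\<close> to \<open>-\<beta>\<close>; both
  halves of the word then express \<open>\<beta>\<close> from a simple root.\<close>

lemma length_word_sref_ge:
  assumes b: "actX al alv w (al i) \<in> pos_roots al alv" and min: "minimal_root_word w i"
    and p: "actX al alv p = sref al alv (actX al alv w (al i))"
  shows "2 * length w + 1 \<le> length p"
proof -
  define b where "b = actX al alv w (al i)"
  have b_root: "b \<in> roots al alv" by (simp add: b_def rootsI)
  have p_b: "actX al alv p b = (\<lambda>j. - b j)" using sref_root_uminus[OF b_root] by (simp add: p b_def)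
  moreover have "(\<lambda>j. - b j) \<in> neg_roots al alv" using b neg_roots_uminus_iff by (simp add: b_def)
  ultimately have "actX al alv p b \<notin> pos_roots al alv"
    using pos_roots_neg_roots_disjoint by auto
  then obtain k where k: "k < length p" "actX al alv (take k p) b = al (p ! k)"
    using word_reaches_simple_root b unfolding b_def by blast
  have "actX al alv (rev (take k p)) (al (p ! k)) = b" using k(2) by (metis actX_rev_actX)
  then have le1: "length w \<le> k" using min k(1) unfolding minimal_root_word_def b_def by fastforce
  have "p = take k p @ [p ! k] @ drop (Suc k) p" using k(1) by (simp add: id_take_nth_drop)
  then have "actX al alv p b = actX al alv (drop (Suc k) p) (rX al alv (p ! k) (al (p ! k)))"
    using k(2) by (metis actX_append actX_Cons append_Cons append_Nil)
  then have "(\<lambda>j. - actX al alv (drop (Suc k) p) (al (p ! k)) j) = (\<lambda>j. - b j)"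
    using p_b by (simp add: rX_simple_root actX_uminus)
  then have "actX al alv (drop (Suc k) p) (al (p ! k)) = b" by (simp add: fun_eq_iff)
  then have le2: "length w \<le> length p - Suc k"
    using min unfolding minimal_root_word_def b_def by fastforce
  show ?thesis using le1 le2 k(1) by simp
qed

lemma reduced_word_sref_minimal:
  assumes "actX al alv w (al i) \<in> pos_roots al alv" "minimal_root_word w i"
  shows "reduced_word al alv (rev w @ [i] @ w)"
proof (rule reduced_wordI)
  fix p assume "actX al alv p = actX al alv (rev w @ [i] @ w)"
  then have "actX al alv p = sref al alv (actX al alv w (al i))" by (simp only: sref_actX)
  then have "2 * length w + 1 \<le> length p" by (rule length_word_sref_ge[OF assms])
  then show "length (rev w @ [i] @ w) \<le> length p" by simp
qed

lemma pair_actY_actX_letter: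
  "pair (actY al alv (xs @ c # ys) y) (actX al alv ys (al c)) = - pair (actY al alv xs y) (al c)"
proof -
  have "actY al alv (xs @ c # ys) y = actY al alv ys (rY al alv c (actY al alv xs y))"
    by (simp add: actY_def)
  then show ?thesis by (simp add: pair_actY_actX pair_rY_simple_root)
qed

text \<open>The root read off a suffix of a minimal word is an inversion of \<open>s\<^sub>\<beta>\<close> other than \<open>\<beta>\<close>.\<close>

lemma quantum_pair_suffix_root:
  assumes b: "actX al alv (u @ c # v) (al i) \<in> pos_roots al alv"
    and min: "minimal_root_word (u @ c # v) i"
    and q: "quantum al alv (actX al alv (u @ c # v) (al i))"
  shows "pair (coroot al alv (actX al alv (u @ c # v) (al i))) (actX al alv v (al c)) = 1"
proof -
  define w b where "w = u @ c # v" and "b = actX al alv w (al i)"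
  have "reduced_word al alv (rev v @ [c] @ (rev u @ [i] @ w))"
    using reduced_word_sref_minimal[OF b min] by (simp add: w_def)
  then have "actX al alv v (al c) \<in> Inv al alv (sref al alv b)"
    using Inv_reduced_word_letter[of "rev v" c "rev u @ [i] @ w"] sref_actX[of w i]
    by (simp add: b_def w_def)
  moreover have "actX al alv v (al c) \<noteq> b"
  proof
    assume "actX al alv v (al c) = b"
    then have "length w \<le> length v" using min unfolding minimal_root_word_def b_def w_def by blast
    then show False by (simp add: w_def)
  qed
  ultimately show ?thesis using q unfolding quantum_def b_def w_def by blast
qed

lemma minimal_root_word_map_idx:
  assumes "\<And>L' idx'. 1 \<le> L' \<Longrightarrow> fold (\<lambda>k. rX al alv (idx k)) [2..<L+1] (al (idx 1))
             = fold (\<lambda>k. rX al alv (idx' k)) [2..<L'+1] (al (idx' 1)) \<Longrightarrow> L \<le> L'"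
  shows "minimal_root_word (map idx [2..<L+1]) (idx 1)"
  unfolding minimal_root_word_def
proof (intro allI impI)
  fix ws i assume h: "actX al alv ws (al i) = actX al alv (map idx [2..<L+1]) (al (idx 1))"
  obtain idx' where e: "actX al alv ws (al i)
      = fold (\<lambda>k. rX al alv (idx' k)) [2..<(length ws + 1) + 1] (al (idx' 1))"
    using actX_simple_root_as_fold[of al alv ws i] by blast
  have eq: "fold (\<lambda>k. rX al alv (idx k)) [2..<L+1] (al (idx 1)) = actX al alv ws (al i)"
    by (simp only: fold_rX_eq_actX h)
  have "L \<le> length ws + 1" using assms[OF _ trans[OF eq e]] by simp
  then show "length (map idx [2..<L+1]) \<le> length ws" by simp linarith
qed

lemma wlen_sref_minimal:
  assumes "actX al alv w (al i) \<in> pos_roots al alv" "minimal_root_word w i"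
  shows "wlen al alv (sref al alv (actX al alv w (al i))) = 2 * length w + 1"
  using reduced_word_sref_minimal[OF assms] by (simp add: sref_actX reduced_word_def)

lemma pair_coroot_fold_letter:
  assumes "t \<in> {1..L-1}"
  shows "pair (coroot al alv (fold (\<lambda>k. rX al alv (idx k)) [2..<L+1] (al (idx 1))))
           (fold (\<lambda>k. rX al alv (idx k)) [t+2..<L+1] (al (idx (t+1))))
      = - pair (fold (\<lambda>k. rY al alv (idx k)) [2..<t+1] (alv (idx 1))) (al (idx (t+1)))"
  unfolding fold_rX_eq_actX fold_rY_eq_actY coroot_actX map_idx_split[OF assms]
  by (rule pair_actY_actX_letter)

lemma quantum_pair_coroot_fold_letter:
  assumes "fold (\<lambda>k. rX al alv (idx k)) [2..<L+1] (al (idx 1)) \<in> pos_roots al alv"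
    and "minimal_root_word (map idx [2..<L+1]) (idx 1)"
    and "quantum al alv (fold (\<lambda>k. rX al alv (idx k)) [2..<L+1] (al (idx 1)))"
    and t: "t \<in> {1..L-1}"
  shows "pair (coroot al alv (fold (\<lambda>k. rX al alv (idx k)) [2..<L+1] (al (idx 1))))
           (fold (\<lambda>k. rX al alv (idx k)) [t+2..<L+1] (al (idx (t+1)))) = 1"
  unfolding fold_rX_eq_actX map_idx_split[OF t]
  by (rule quantum_pair_suffix_root)
    (use assms in \<open>simp_all only: fold_rX_eq_actX map_idx_split[OF t]\<close>)

lemma ht_sum_simple_coroots:
  assumes "finite K"
  shows "ht alv (\<lambda>j. \<Sum>k\<in>K. alv (idx k) j) = int (card K)"
proof -
  define N where "N = (\<lambda>i. \<Sum>k\<in>K. if idx k = i then 1 else 0 :: int)"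
  have "lincomb N alv = (\<lambda>j. \<Sum>k\<in>K. alv (idx k) j)"
  proof
    fix j
    have "lincomb N alv j = (\<Sum>i\<in>UNIV. \<Sum>k\<in>K. if idx k = i then alv i j else 0)"
      unfolding lincomb_def N_def
      by (simp add: sum_distrib_right if_distrib[of "\<lambda>x. x * _"] cong: if_cong)
    also have "\<dots> = (\<Sum>k\<in>K. \<Sum>i\<in>UNIV. if idx k = i then alv i j else 0)" by (rule sum.swap)
    also have "\<dots> = (\<Sum>k\<in>K. alv (idx k) j)" by simp
    finally show "lincomb N alv j = (\<Sum>k\<in>K. alv (idx k) j)" .
  qed
  moreover have "(\<Sum>i\<in>UNIV. N i) = int (card K)"
    unfolding N_def by (subst sum.swap) simp
  ultimately show ?thesis using ht_lincomb by metis
qed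

end

lemma partial_coroot_sums_iff:
  fixes gv :: "nat \<Rightarrow> ('n::finite) lat"
  assumes gv_1: "gv 1 = alv (idx 1)"
    and gv_Suc: "\<And>t. 1 \<le> t \<Longrightarrow> gv (Suc t) = rY al alv (idx (Suc t)) (gv t)"
  shows "(\<forall>t\<in>{1..L}. gv t = (\<lambda>j. \<Sum>k=1..t. alv (idx k) j)
            \<and> (2 \<le> t \<longrightarrow> pair (gv (t-1)) (al (idx t)) = -1))
     \<longleftrightarrow> (\<forall>t\<in>{1..L-1}. pair (gv t) (al (idx (t+1))) = -1)"
    (is "?sums \<longleftrightarrow> ?pairs")
proof
  assume sums: ?sums
  show ?pairs
  proof
    fix t assume "t \<in> {1..L-1}"
    then have "t + 1 \<in> {1..L}" "2 \<le> t + 1" by auto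
    then show "pair (gv t) (al (idx (t+1))) = -1" using sums by fastforce
  qed
next
  assume pairs: ?pairs
  have sums: "gv t = (\<lambda>j. \<Sum>k=1..t. alv (idx k) j)" if "t \<in> {1..L}" for t
    using that
  proof (induction t)
    case (Suc t)
    show ?case
    proof (cases "t = 0")
      case False
      then have "pair (gv t) (al (idx (Suc t))) = -1" using pairs Suc.prems by auto
      then show ?thesis using Suc False by (simp add: gv_Suc rY_def)
    qed (use gv_1 in simp)
  qed simp
  show ?sums
  proof (intro ballI conjI impI)
    fix t assume t: "t \<in> {1..L}"
    then show "gv t = (\<lambda>j. \<Sum>k=1..t. alv (idx k) j)" by (rule sums)
    assume "2 \<le> t"
    then have "t - 1 \<in> {1..L-1}" "t - 1 + 1 = t" using t by auto
    then show "pair (gv (t-1)) (al (idx t)) = -1" using pairs[rule_format, of "t - 1"] by simp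
  qed
qed

theorem lemma2p3:
  fixes al alv :: "'i::finite \<Rightarrow> ('n::finite) lat"
    and b :: "'n lat" and idx :: "nat \<Rightarrow> 'i" and L :: nat
  assumes km: "km_datum al alv"
    and bpos: "b \<in> pos_roots al alv"
    and L1: "1 \<le> L"
    and bexpr: "b = fold (\<lambda>k. rX al alv (idx k)) [2..<L+1] (al (idx 1))"
    and Lmin: "\<And>L' idx'. 1 \<le> L' \<Longrightarrow>
                 b = fold (\<lambda>k. rX al alv (idx' k)) [2..<L'+1] (al (idx' 1)) \<Longrightarrow> L \<le> L'"
  defines "bt \<equiv> \<lambda>t. fold (\<lambda>k. rX al alv (idx k)) [t+2..<L+1] (al (idx (t+1)))"
    and "gv \<equiv> \<lambda>t. fold (\<lambda>k. rY al alv (idx k)) [2..<t+1] (alv (idx 1))"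
  shows "(quantum al alv b
          \<longleftrightarrow> (\<forall>t\<in>{1..L-1}. pair (coroot al alv b) (bt t) = 1))
       \<and> ((\<forall>t\<in>{1..L-1}. pair (coroot al alv b) (bt t) = 1)
          \<longleftrightarrow> (\<forall>t\<in>{1..L}. gv t = (\<lambda>j. \<Sum>k=1..t. alv (idx k) j)
                  \<and> (2 \<le> t \<longrightarrow> pair (gv (t-1)) (al (idx t)) = -1)))
       \<and> ((\<forall>t\<in>{1..L}. gv t = (\<lambda>j. \<Sum>k=1..t. alv (idx k) j)
                  \<and> (2 \<le> t \<longrightarrow> pair (gv (t-1)) (al (idx t)) = -1))
          \<longleftrightarrow> int (wlen al alv (sref al alv b)) = 2 * ht alv (coroot al alv b) - 1)"
proof -
  interpret km_root_datum al alv by (rule km_root_datum.intro) (rule km)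
  have min: "minimal_root_word (map idx [2..<L+1]) (idx 1)"
    by (rule minimal_root_word_map_idx[OF Lmin[unfolded bexpr]])
  have coroot: "coroot al alv b = gv L"
    by (simp only: bexpr gv_def fold_rX_eq_actX fold_rY_eq_actY coroot_actX)
  have gv_1: "gv 1 = alv (idx 1)" by (simp add: gv_def)
  have gv_Suc: "gv (Suc t) = rY al alv (idx (Suc t)) (gv t)" if "1 \<le> t" for t
    using that by (simp add: gv_def)
  have "(\<forall>t\<in>{1..L-1}. pair (coroot al alv b) (bt t) = 1)
      \<longleftrightarrow> (\<forall>t\<in>{1..L-1}. pair (gv t) (al (idx (t+1))) = -1)"
    using pair_coroot_fold_letter[of _ L idx] unfolding bexpr bt_def gv_def by auto
  moreover have "quantum al alv b \<Longrightarrow> \<forall>t\<in>{1..L-1}. pair (coroot al alv b) (bt t) = 1"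
    using quantum_pair_coroot_fold_letter[OF bpos[unfolded bexpr] min] unfolding bexpr bt_def
      by blast
  moreover have "gv L = (\<lambda>j. \<Sum>k=1..L. alv (idx k) j) \<Longrightarrow> quantum al alv b"
    using quantum_iff_wlen_sref[OF bpos]
      wlen_sref_minimal[OF bpos[unfolded bexpr fold_rX_eq_actX] min]
      ht_sum_simple_coroots[of "{1..L}" idx] coroot L1
    by (simp add: bexpr fold_rX_eq_actX)
  moreover have "L \<in> {1..L}" using L1 by simp
  ultimately show ?thesis
    using partial_coroot_sums_iff[where gv = gv and idx = idx and L = L, OF gv_1 gv_Suc]
      quantum_iff_wlen_sref[OF bpos]
    by blast
qed

end
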